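(* There is an absolute constant $D>0$ such that for every prime power $q$, every positive integer $n$, and every $A\in\Lambda(n,\mathbb{F}_q)$ with $\mathrm{rank}(A)>\frac23 n$, the number of isotropic spaces of $A$ (subspaces $U\le\mathbb{F}_q^n$ with $u^tAu'=0$ for all $u,u'\in U$) is at most $q^{\frac16 n^2+Dn}$.
   Context: $\Lambda(n,\mathbb{F}_q)$ is the space of $n\times n$ alternating matrices over $\mathbb{F}_q$. *)

theory Defs
  imports "HOL-Algebra.Ring" "HOL-Algebra.Ring_Divisibility" Complex_Main
begin

text \<open>The finite field F_q is an HOL-Algebra field R whose carrier is a finite set of
naturals (every finite field is isomorphic to such an R, and q = card (carrier R)).
Vectors of F_q^n are functions nat => nat with entries in the carrier at indices < n and
equal to zero at indices >= n; n x n matrices are functions nat => nat => nat, only the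
entries with indices < n being relevant.\<close>

definition vecs :: "nat ring \<Rightarrow> nat \<Rightarrow> (nat \<Rightarrow> nat) set" where
  "vecs R n = {v. (\<forall>i<n. v i \<in> carrier R) \<and> (\<forall>i\<ge>n. v i = \<zero>\<^bsub>R\<^esub>)}"

definition vzero :: "nat ring \<Rightarrow> nat \<Rightarrow> nat" where
  "vzero R = (\<lambda>i. \<zero>\<^bsub>R\<^esub>)"

definition vadd :: "nat ring \<Rightarrow> (nat \<Rightarrow> nat) \<Rightarrow> (nat \<Rightarrow> nat) \<Rightarrow> nat \<Rightarrow> nat" where
  "vadd R u v = (\<lambda>i. u i \<oplus>\<^bsub>R\<^esub> v i)"

definition vsmult :: "nat ring \<Rightarrow> nat \<Rightarrow> (nat \<Rightarrow> nat) \<Rightarrow> nat \<Rightarrow> nat" where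
  "vsmult R c u = (\<lambda>i. c \<otimes>\<^bsub>R\<^esub> u i)"

definition alt_matrix :: "nat ring \<Rightarrow> nat \<Rightarrow> (nat \<Rightarrow> nat \<Rightarrow> nat) \<Rightarrow> bool" where
  "alt_matrix R n A \<longleftrightarrow>
     (\<forall>i<n. \<forall>j<n. A i j \<in> carrier R) \<and>
     (\<forall>i<n. A i i = \<zero>\<^bsub>R\<^esub>) \<and>
     (\<forall>i<n. \<forall>j<n. A j i = \<ominus>\<^bsub>R\<^esub> (A i j))"

definition cols_indep :: "nat ring \<Rightarrow> nat \<Rightarrow> (nat \<Rightarrow> nat \<Rightarrow> nat) \<Rightarrow> nat set \<Rightarrow> bool" where
  "cols_indep R n A J \<longleftrightarrow>
     (\<forall>c. (\<forall>j\<in>J. c j \<in> carrier R) \<longrightarrow>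
          (\<forall>i<n. (\<Oplus>\<^bsub>R\<^esub> j\<in>J. c j \<otimes>\<^bsub>R\<^esub> A i j) = \<zero>\<^bsub>R\<^esub>) \<longrightarrow>
          (\<forall>j\<in>J. c j = \<zero>\<^bsub>R\<^esub>))"

definition mat_rank :: "nat ring \<Rightarrow> nat \<Rightarrow> (nat \<Rightarrow> nat \<Rightarrow> nat) \<Rightarrow> nat" where
  "mat_rank R n A = Max {card J | J. J \<subseteq> {..<n} \<and> cols_indep R n A J}"

definition bilin :: "nat ring \<Rightarrow> nat \<Rightarrow> (nat \<Rightarrow> nat \<Rightarrow> nat) \<Rightarrow> (nat \<Rightarrow> nat) \<Rightarrow> (nat \<Rightarrow> nat) \<Rightarrow> nat" where
  "bilin R n A u v = (\<Oplus>\<^bsub>R\<^esub> i\<in>{..<n}. \<Oplus>\<^bsub>R\<^esub> j\<in>{..<n}. u i \<otimes>\<^bsub>R\<^esub> A i j \<otimes>\<^bsub>R\<^esub> v j)"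

definition is_subspace :: "nat ring \<Rightarrow> nat \<Rightarrow> (nat \<Rightarrow> nat) set \<Rightarrow> bool" where
  "is_subspace R n U \<longleftrightarrow> U \<subseteq> vecs R n \<and> vzero R \<in> U \<and>
     (\<forall>u\<in>U. \<forall>v\<in>U. vadd R u v \<in> U) \<and>
     (\<forall>c\<in>carrier R. \<forall>u\<in>U. vsmult R c u \<in> U)"

definition isotropic :: "nat ring \<Rightarrow> nat \<Rightarrow> (nat \<Rightarrow> nat \<Rightarrow> nat) \<Rightarrow> (nat \<Rightarrow> nat) set \<Rightarrow> bool" where
  "isotropic R n A U \<longleftrightarrow> is_subspace R n U \<and>
     (\<forall>u\<in>U. \<forall>v\<in>U. bilin R n A u v = \<zero>\<^bsub>R\<^esub>)"

end

theory Submission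
  imports Defs
begin

text \<open>Write s = n - rank A, so 3 s < n. Sort the isotropic spaces U by their type (a, b), where
  a = dim (U \<inter> ker A) and a + b = dim U, and count ordered bases x_1, ..., x_a, y_1, ..., y_b
  of U that begin with a basis of U \<inter> ker A. Every U of type (a, b) has at least
  q^(a(a-1) + b(a+b-1)) of them. Conversely, the x_i lie in ker A, which has at most q^s
  elements, while the vectors A y_j are linearly independent (a dependency would put a
  combination of the y_j into U \<inter> ker A) and y_i is orthogonal to A y_1, ..., A y_(i-1),
  which leaves at most q^(n-i+1) choices for y_i. Hence there are at most
  q^(a(s-a-b) + bn - 3b^2/2 + O(n)) spaces of type (a, b), and for 3 s \<le> n this exponent is at
  most n^2/6 + O(n). Summing over the (n+1)^2 types only costs another factor q^(2n).\<close>

locale finite_field = field R for R :: "nat ring" (structure) +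
  assumes finite_carrier: "finite (carrier R)"

definition lin_comb :: "nat ring \<Rightarrow> nat \<Rightarrow> (nat \<Rightarrow> nat) \<Rightarrow> (nat \<Rightarrow> nat \<Rightarrow> nat) \<Rightarrow> nat \<Rightarrow> nat" where
  "lin_comb R m c z = (\<lambda>t. \<Oplus>\<^bsub>R\<^esub> j\<in>{..<m}. c j \<otimes>\<^bsub>R\<^esub> z j t)"

definition span_seq :: "nat ring \<Rightarrow> nat \<Rightarrow> (nat \<Rightarrow> nat \<Rightarrow> nat) \<Rightarrow> (nat \<Rightarrow> nat) set" where
  "span_seq R m z = {lin_comb R m c z | c. c \<in> {..<m} \<rightarrow> carrier R}"

definition indep_seq :: "nat ring \<Rightarrow> nat \<Rightarrow> nat \<Rightarrow> (nat \<Rightarrow> nat \<Rightarrow> nat) \<Rightarrow> bool" where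
  "indep_seq R n m z \<longleftrightarrow> (\<forall>i<m. z i \<in> vecs R n \<and> z i \<notin> span_seq R i z)"

definition dot :: "nat ring \<Rightarrow> nat \<Rightarrow> (nat \<Rightarrow> nat) \<Rightarrow> (nat \<Rightarrow> nat) \<Rightarrow> nat" where
  "dot R n u v = (\<Oplus>\<^bsub>R\<^esub> t\<in>{..<n}. u t \<otimes>\<^bsub>R\<^esub> v t)"

definition vec_mat :: "nat ring \<Rightarrow> nat \<Rightarrow> (nat \<Rightarrow> nat \<Rightarrow> nat) \<Rightarrow> (nat \<Rightarrow> nat) \<Rightarrow> nat \<Rightarrow> nat" where
  "vec_mat R n A u = (\<lambda>t. if t < n then \<Oplus>\<^bsub>R\<^esub> i\<in>{..<n}. u i \<otimes>\<^bsub>R\<^esub> A i t else \<zero>\<^bsub>R\<^esub>)"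

context finite_field
begin

abbreviation "F \<equiv> carrier R"
abbreviation "q \<equiv> card (carrier R)"

lemma card_carrier_ge_2: "q \<ge> 2"
proof -
  have "card {\<zero>, \<one>} = 2" using zero_not_one by simp
  then show ?thesis using card_mono[OF finite_carrier, of "{\<zero>, \<one>}"] by simp
qed

lemma vecs_carrier: "v \<in> vecs R n \<Longrightarrow> v t \<in> F"
  unfolding vecs_def by (cases "t < n") auto

lemma vecs_seq_carrier: "\<forall>j<m. z j \<in> vecs R n \<Longrightarrow> j < m \<Longrightarrow> z j t \<in> F"
  using vecs_carrier by blast

lemma vecs_zero_beyond: "v \<in> vecs R n \<Longrightarrow> t \<ge> n \<Longrightarrow> v t = \<zero>"
  unfolding vecs_def by auto

lemma vecs_eqI:
  assumes "u \<in> vecs R n" "v \<in> vecs R n" "\<And>t. t < n \<Longrightarrow> u t = v t"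
  shows "u = v"
proof
  fix t
  show "u t = v t" using assms vecs_zero_beyond[of u n t] vecs_zero_beyond[of v n t] by (cases "t < n") auto
qed

lemma vzero_in_vecs [simp]: "vzero R \<in> vecs R n"
  unfolding vecs_def vzero_def by auto

lemma vadd_in_vecs [simp]: "u \<in> vecs R n \<Longrightarrow> v \<in> vecs R n \<Longrightarrow> vadd R u v \<in> vecs R n"
  unfolding vecs_def vadd_def by auto

lemma vsmult_in_vecs [simp]: "c \<in> F \<Longrightarrow> u \<in> vecs R n \<Longrightarrow> vsmult R c u \<in> vecs R n"
  unfolding vecs_def vsmult_def by auto

lemma vadd_vzero_right: "u \<in> vecs R n \<Longrightarrow> vadd R u (vzero R) = u"
  by (rule vecs_eqI[where n=n]) (auto simp: vadd_def vzero_def vecs_carrier)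

lemma vsmult_vzero: "c \<in> F \<Longrightarrow> vsmult R c (vzero R) = vzero R"
  unfolding vsmult_def vzero_def by simp

lemma vecs_bij_PiE: "bij_betw (\<lambda>v. restrict v {..<n}) (vecs R n) ({..<n} \<rightarrow>\<^sub>E F)"
proof (rule bij_betwI[where g = "\<lambda>f i. if i < n then f i else \<zero>"])
  show "(\<lambda>v. restrict v {..<n}) \<in> vecs R n \<rightarrow> {..<n} \<rightarrow>\<^sub>E F"
    by (rule funcsetI) (simp add: restrict_PiE_iff vecs_carrier)
  show "(\<lambda>f i. if i < n then f i else \<zero>) \<in> ({..<n} \<rightarrow>\<^sub>E F) \<rightarrow> vecs R n"
    unfolding vecs_def by (auto simp: PiE_iff)
next
  fix v assume "v \<in> vecs R n"
  show "(\<lambda>i. if i < n then restrict v {..<n} i else \<zero>) = v"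
  proof (rule ext)
    fix i show "(if i < n then restrict v {..<n} i else \<zero>) = v i"
      using vecs_zero_beyond[OF \<open>v \<in> vecs R n\<close>, of i] by (cases "i < n") auto
  qed
next
  fix f assume "f \<in> {..<n} \<rightarrow>\<^sub>E F"
  show "restrict (\<lambda>i. if i < n then f i else \<zero>) {..<n} = f"
  proof (rule ext)
    fix i show "restrict (\<lambda>i. if i < n then f i else \<zero>) {..<n} i = f i"
      using PiE_arb[OF \<open>f \<in> {..<n} \<rightarrow>\<^sub>E F\<close>, of i] by (cases "i < n") auto
  qed
qed

lemma finite_vecs: "finite (vecs R n)"
  using bij_betw_finite[OF vecs_bij_PiE] finite_carrier by (simp add: finite_PiE)

lemma card_vecs: "card (vecs R n) = q ^ n"
  using bij_betw_same_card[OF vecs_bij_PiE] by (simp add: card_PiE)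

lemma subspace_in_vecs: "is_subspace R n X \<Longrightarrow> X \<subseteq> vecs R n"
  unfolding is_subspace_def by blast

lemma subspace_finite: "is_subspace R n X \<Longrightarrow> finite X"
  using finite_vecs finite_subset subspace_in_vecs by blast

lemma subspace_Int: "is_subspace R n X \<Longrightarrow> is_subspace R n Y \<Longrightarrow> is_subspace R n (X \<inter> Y)"
  unfolding is_subspace_def by auto

lemma lin_comb_carrier:
  assumes "c \<in> {..<m} \<rightarrow> F" and "\<forall>j<m. z j \<in> vecs R n"
  shows "lin_comb R m c z t \<in> F"
  unfolding lin_comb_def using assms by (auto intro!: finsum_closed simp: vecs_seq_carrier)

lemma lin_comb_in_vecs:
  assumes c: "c \<in> {..<m} \<rightarrow> F" and z: "\<forall>j<m. z j \<in> vecs R n"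
  shows "lin_comb R m c z \<in> vecs R n"
proof -
  have "lin_comb R m c z t = \<zero>" if "t \<ge> n" for t
  proof -
    have "z j t = \<zero>" if "j < m" for j using z that \<open>t \<ge> n\<close> vecs_zero_beyond by blast
    then show ?thesis unfolding lin_comb_def using c by (intro add.finprod_one_eqI) (auto simp: Pi_iff)
  qed
  then show ?thesis unfolding vecs_def using lin_comb_carrier[OF c z] by auto
qed

lemma lin_comb_0: "lin_comb R 0 c z = vzero R"
  unfolding lin_comb_def vzero_def by simp

lemma lin_comb_Suc:
  assumes c: "c \<in> {..<Suc m} \<rightarrow> F" and z: "\<forall>j<Suc m. z j \<in> vecs R n"
  shows "lin_comb R (Suc m) c z = vadd R (lin_comb R m c z) (vsmult R (c m) (z m))"
proof
  fix t
  have "(\<lambda>j. c j \<otimes> z j t) \<in> {..<Suc m} \<rightarrow> F" using c by (auto simp: vecs_seq_carrier[OF z])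
  then show "lin_comb R (Suc m) c z t = vadd R (lin_comb R m c z) (vsmult R (c m) (z m)) t"
    unfolding lin_comb_def vadd_def vsmult_def lessThan_Suc
    by (simp add: finsum_insert finsum_closed a_comm)
qed

lemma lin_comb_cong:
  assumes c: "c \<in> {..<m} \<rightarrow> F" and z: "\<forall>j<m. z j \<in> vecs R n"
    and "\<forall>j<m. c' j = c j" and "\<forall>j<m. z' j = z j"
  shows "lin_comb R m c' z' = lin_comb R m c z"
proof
  fix t
  show "lin_comb R m c' z' t = lin_comb R m c z t"
    unfolding lin_comb_def using assms by (intro finsum_cong') (auto simp: vecs_seq_carrier)
qed

lemma lin_comb_add:
  assumes c: "c \<in> {..<m} \<rightarrow> F" "d \<in> {..<m} \<rightarrow> F" and z: "\<forall>j<m. z j \<in> vecs R n"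
  shows "vadd R (lin_comb R m c z) (lin_comb R m d z) = lin_comb R m (\<lambda>j. c j \<oplus> d j) z"
proof
  fix t
  have "vadd R (lin_comb R m c z) (lin_comb R m d z) t
      = (\<Oplus>j\<in>{..<m}. c j \<otimes> z j t \<oplus> d j \<otimes> z j t)"
    unfolding vadd_def lin_comb_def using c by (intro finsum_addf[symmetric]) (auto simp: vecs_seq_carrier[OF z])
  also have "\<dots> = lin_comb R m (\<lambda>j. c j \<oplus> d j) z t"
    unfolding lin_comb_def using c by (intro finsum_cong') (auto simp: Pi_iff l_distr vecs_seq_carrier[OF z])
  finally show "vadd R (lin_comb R m c z) (lin_comb R m d z) t = lin_comb R m (\<lambda>j. c j \<oplus> d j) z t" .
qed

lemma lin_comb_smult:
  assumes a: "a \<in> F" and c: "c \<in> {..<m} \<rightarrow> F" and z: "\<forall>j<m. z j \<in> vecs R n"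
  shows "vsmult R a (lin_comb R m c z) = lin_comb R m (\<lambda>j. a \<otimes> c j) z"
proof
  fix t
  have "vsmult R a (lin_comb R m c z) t = (\<Oplus>j\<in>{..<m}. a \<otimes> (c j \<otimes> z j t))"
    unfolding vsmult_def lin_comb_def using a c by (intro finsum_rdistr) (auto simp: vecs_seq_carrier[OF z])
  also have "\<dots> = lin_comb R m (\<lambda>j. a \<otimes> c j) z t"
    unfolding lin_comb_def using a c by (intro finsum_cong') (auto simp: Pi_iff m_assoc vecs_seq_carrier[OF z])
  finally show "vsmult R a (lin_comb R m c z) t = lin_comb R m (\<lambda>j. a \<otimes> c j) z t" .
qed

lemma lin_comb_in_span_seq: "c \<in> {..<m} \<rightarrow> F \<Longrightarrow> lin_comb R m c z \<in> span_seq R m z"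
  unfolding span_seq_def by blast

lemma span_seq_subspace:
  assumes z: "\<forall>j<m. z j \<in> vecs R n"
  shows "is_subspace R n (span_seq R m z)"
  unfolding is_subspace_def
proof (intro conjI ballI)
  show "span_seq R m z \<subseteq> vecs R n"
    unfolding span_seq_def using lin_comb_in_vecs[OF _ z] by blast
  have "lin_comb R m (\<lambda>_. \<zero>) z = vzero R"
    unfolding lin_comb_def vzero_def
    by (rule ext, rule add.finprod_one_eqI) (simp add: vecs_seq_carrier[OF z])
  then show "vzero R \<in> span_seq R m z"
    using lin_comb_in_span_seq[of "\<lambda>_. \<zero>" m z] by auto
next
  fix u v assume "u \<in> span_seq R m z" "v \<in> span_seq R m z"
  then obtain c d where "c \<in> {..<m} \<rightarrow> F" "u = lin_comb R m c z"
    and "d \<in> {..<m} \<rightarrow> F" "v = lin_comb R m d z"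
    unfolding span_seq_def by blast
  then show "vadd R u v \<in> span_seq R m z"
    using lin_comb_add[OF _ _ z] lin_comb_in_span_seq[of "\<lambda>j. c j \<oplus> d j" m z] by auto
next
  fix a u assume "a \<in> F" "u \<in> span_seq R m z"
  then obtain c where "c \<in> {..<m} \<rightarrow> F" "u = lin_comb R m c z"
    unfolding span_seq_def by blast
  then show "vsmult R a u \<in> span_seq R m z"
    using lin_comb_smult[OF \<open>a \<in> F\<close> _ z] lin_comb_in_span_seq[of "\<lambda>j. a \<otimes> c j" m z] \<open>a \<in> F\<close>
    by auto
qed

lemma span_seq_subset:
  assumes X: "is_subspace R n X" and z: "\<forall>j<m. z j \<in> X"
  shows "span_seq R m z \<subseteq> X"
  using z
proof (induction m)
  case 0
  then show ?case using X by (auto simp: span_seq_def lin_comb_0 is_subspace_def)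
next
  case (Suc m)
  have zv: "\<forall>j<Suc m. z j \<in> vecs R n" using Suc.prems subspace_in_vecs[OF X] by blast
  show ?case
  proof
    fix u assume "u \<in> span_seq R (Suc m) z"
    then obtain c where c: "c \<in> {..<Suc m} \<rightarrow> F" "u = lin_comb R (Suc m) c z"
      unfolding span_seq_def by blast
    have "c \<in> {..<m} \<rightarrow> F" using c(1) by (auto simp: Pi_iff)
    then have "lin_comb R m c z \<in> X"
      using Suc lin_comb_in_span_seq[of c m z] by auto
    moreover have "vsmult R (c m) (z m) \<in> X"
      using X Suc.prems c(1) unfolding is_subspace_def by (simp add: Pi_iff)
    ultimately show "u \<in> X"
      using X lin_comb_Suc[OF c(1) zv] c(2) unfolding is_subspace_def by auto
  qed
qed

lemma in_span_seq:
  assumes i: "i < m" and z: "\<forall>j<m. z j \<in> vecs R n"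
  shows "z i \<in> span_seq R m z"
proof -
  let ?c = "\<lambda>j. if j = i then \<one> else \<zero>"
  have "lin_comb R m ?c z t = (\<Oplus>j\<in>{..<m}. if i = j then z j t else \<zero>)" for t
    unfolding lin_comb_def by (intro finsum_cong') (auto simp: vecs_seq_carrier[OF z])
  also have "\<dots> t = z i t" for t
    using i by (intro finsum_singleton) (auto simp: vecs_seq_carrier[OF z])
  finally have "lin_comb R m ?c z = z i" by auto
  then show ?thesis using lin_comb_in_span_seq[of ?c m z] by auto
qed

lemma span_seq_cong:
  assumes "\<forall>j<m. z j \<in> vecs R n" and "\<forall>j<m. z' j = z j"
  shows "span_seq R m z' = span_seq R m z"
  unfolding span_seq_def using lin_comb_cong[OF _ assms(1) _ assms(2)] by (metis (no_types, lifting))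

lemma span_seq_Suc:
  assumes z: "\<forall>j<Suc m. z j \<in> vecs R n"
  shows "span_seq R (Suc m) z = (\<lambda>(s, a). vadd R s (vsmult R a (z m))) ` (span_seq R m z \<times> F)"
proof (intro equalityI subsetI)
  fix u assume "u \<in> span_seq R (Suc m) z"
  then obtain c where c: "c \<in> {..<Suc m} \<rightarrow> F" and u: "u = lin_comb R (Suc m) c z"
    unfolding span_seq_def by blast
  have "c \<in> {..<m} \<rightarrow> F" "c m \<in> F" using c by (auto simp: Pi_iff)
  then have "(lin_comb R m c z, c m) \<in> span_seq R m z \<times> F"
    using lin_comb_in_span_seq[of c m z] by simp
  moreover have "u = (\<lambda>(s, a). vadd R s (vsmult R a (z m))) (lin_comb R m c z, c m)"
    using lin_comb_Suc[OF c z] u by simp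
  ultimately show "u \<in> (\<lambda>(s, a). vadd R s (vsmult R a (z m))) ` (span_seq R m z \<times> F)"
    by (rule rev_image_eqI)
next
  fix u assume "u \<in> (\<lambda>(s, a). vadd R s (vsmult R a (z m))) ` (span_seq R m z \<times> F)"
  then obtain s a where s: "s \<in> span_seq R m z" and a: "a \<in> F"
    and u: "u = vadd R s (vsmult R a (z m))"
    by auto
  obtain c where c: "c \<in> {..<m} \<rightarrow> F" and sc: "s = lin_comb R m c z"
    using s unfolding span_seq_def by blast
  have c': "c(m := a) \<in> {..<Suc m} \<rightarrow> F" using c a by (auto simp: Pi_iff less_Suc_eq)
  have "lin_comb R m (c(m := a)) z = lin_comb R m c z"
    by (rule lin_comb_cong[OF c, where n=n]) (use z in auto)
  then have "lin_comb R (Suc m) (c(m := a)) z = u"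
    using lin_comb_Suc[OF c' z] u sc by simp
  then show "u \<in> span_seq R (Suc m) z" using lin_comb_in_span_seq[OF c', of z] by simp
qed

section \<open>Independent sequences and dimension\<close>

lemma affine_eq_solve:
  assumes c: "s \<in> F" "s' \<in> F" "a \<in> F" "a' \<in> F" "x \<in> F"
    and e: "s \<oplus> a \<otimes> x = s' \<oplus> a' \<otimes> x" and ne: "a \<noteq> a'"
  shows "x = inv (a \<ominus> a') \<otimes> (s' \<oplus> \<ominus> \<one> \<otimes> s)"
proof -
  have d: "a \<ominus> a' \<in> Units R"
    using c ne field_Units by (auto simp: r_right_minus_eq)
  have "(a \<ominus> a') \<otimes> x = (s \<oplus> a \<otimes> x) \<oplus> \<ominus> (s \<oplus> a' \<otimes> x)" using c by algebra
  also have "\<dots> = s' \<oplus> \<ominus> \<one> \<otimes> s" using c e by algebra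
  finally show ?thesis
    using d c by (metis Units_inv_closed Units_l_inv Units_closed l_one m_assoc)
qed

lemma span_seq_Suc_inj:
  assumes z: "\<forall>j<Suc m. z j \<in> vecs R n" and new: "z m \<notin> span_seq R m z"
  shows "inj_on (\<lambda>(s, a). vadd R s (vsmult R a (z m))) (span_seq R m z \<times> F)"
proof (rule inj_onI)
  fix p p' assume p: "p \<in> span_seq R m z \<times> F" and p': "p' \<in> span_seq R m z \<times> F"
    and e': "(\<lambda>(s, a). vadd R s (vsmult R a (z m))) p = (\<lambda>(s, a). vadd R s (vsmult R a (z m))) p'"
  obtain s a s' a' where pp: "p = (s, a)" "p' = (s', a')" by fastforce
  have s: "s \<in> span_seq R m z" "a \<in> F" and s': "s' \<in> span_seq R m z" "a' \<in> F"
    using p p' pp by auto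
  have e: "vadd R s (vsmult R a (z m)) = vadd R s' (vsmult R a' (z m))" using e' pp by simp
  have S: "is_subspace R n (span_seq R m z)" using z by (intro span_seq_subspace) auto
  have sv: "s \<in> vecs R n" "s' \<in> vecs R n" using s s' subspace_in_vecs[OF S] by auto
  have zm: "z m \<in> vecs R n" using z by simp
  have et: "s t \<oplus> a \<otimes> z m t = s' t \<oplus> a' \<otimes> z m t" for t
    using fun_cong[OF e, of t] unfolding vadd_def vsmult_def by simp
  have aa: "a = a'"
  proof (rule ccontr)
    assume ne: "a \<noteq> a'"
    have "inv (a \<ominus> a') \<in> F" using s s' ne field_Units by (auto simp: r_right_minus_eq)
    then have "vsmult R (inv (a \<ominus> a')) (vadd R s' (vsmult R (\<ominus> \<one>) s)) \<in> span_seq R m z"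
      using S s s' unfolding is_subspace_def by simp
    moreover have "vsmult R (inv (a \<ominus> a')) (vadd R s' (vsmult R (\<ominus> \<one>) s)) = z m"
    proof
      fix t show "vsmult R (inv (a \<ominus> a')) (vadd R s' (vsmult R (\<ominus> \<one>) s)) t = z m t"
        using affine_eq_solve[OF vecs_carrier[OF sv(1)] vecs_carrier[OF sv(2)] s(2) s'(2)
            vecs_carrier[OF zm] et ne]
        unfolding vsmult_def vadd_def by simp
    qed
    ultimately show False using new by simp
  qed
  then have "s = s'"
    using et vecs_carrier[OF sv(1)] vecs_carrier[OF sv(2)] vecs_carrier[OF zm] \<open>a' \<in> F\<close>
    by (intro vecs_eqI[OF sv]) (metis add.r_cancel m_closed)
  then show "p = p'" using aa pp by simp
qed

lemma indep_seq_in_vecs: "indep_seq R n m z \<Longrightarrow> \<forall>j<m. z j \<in> vecs R n"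
  unfolding indep_seq_def by auto

lemma indep_seq_mono: "indep_seq R n m z \<Longrightarrow> k \<le> m \<Longrightarrow> indep_seq R n k z"
  unfolding indep_seq_def by auto

lemma indep_seq_cong:
  assumes z: "indep_seq R n m z" and e: "\<forall>j<m. z' j = z j"
  shows "indep_seq R n m z'"
  unfolding indep_seq_def
proof (intro allI impI)
  fix i assume i: "i < m"
  have "span_seq R i z' = span_seq R i z"
    by (rule span_seq_cong[where n=n]) (use indep_seq_in_vecs[OF z] e i in auto)
  then show "z' i \<in> vecs R n \<and> z' i \<notin> span_seq R i z'" using z e i unfolding indep_seq_def by auto
qed

lemma card_span_seq:
  assumes "indep_seq R n m z"
  shows "card (span_seq R m z) = q ^ m"
  using assms
proof (induction m)
  case 0
  then show ?case by (simp add: span_seq_def lin_comb_0)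
next
  case (Suc m)
  have z: "\<forall>j<Suc m. z j \<in> vecs R n" using indep_seq_in_vecs[OF Suc.prems] .
  have new: "z m \<notin> span_seq R m z" using Suc.prems unfolding indep_seq_def by auto
  have "card (span_seq R (Suc m) z) = card (span_seq R m z \<times> F)"
    unfolding span_seq_Suc[OF z] by (rule card_image[OF span_seq_Suc_inj[OF z new]])
  also have "\<dots> = q ^ m * q"
    using Suc.IH indep_seq_mono[OF Suc.prems] by (simp add: card_cartesian_product)
  finally show ?case by simp
qed

lemma indep_seq_lin_comb_eq_zero:
  assumes "indep_seq R n m z" "c \<in> {..<m} \<rightarrow> F" "lin_comb R m c z = vzero R"
  shows "\<forall>j<m. c j = \<zero>"
  using assms
proof (induction m arbitrary: c)
  case 0
  then show ?case by simp
next
  case (Suc m)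
  have z: "\<forall>j<Suc m. z j \<in> vecs R n" using indep_seq_in_vecs[OF Suc.prems(1)] .
  have new: "z m \<notin> span_seq R m z" using Suc.prems(1) unfolding indep_seq_def by auto
  have c: "c \<in> {..<m} \<rightarrow> F" "c m \<in> F" using Suc.prems(2) by (auto simp: Pi_iff)
  have S: "is_subspace R n (span_seq R m z)" using z by (intro span_seq_subspace) auto
  have "vadd R (vzero R) (vsmult R \<zero> (z m)) = vzero R"
    by (rule ext) (simp add: vadd_def vsmult_def vzero_def vecs_seq_carrier[OF z])
  then have "vadd R (lin_comb R m c z) (vsmult R (c m) (z m)) = vadd R (vzero R) (vsmult R \<zero> (z m))"
    using lin_comb_Suc[OF Suc.prems(2) z] Suc.prems(3) by simp
  moreover have "(lin_comb R m c z, c m) \<in> span_seq R m z \<times> F"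
    using lin_comb_in_span_seq[OF c(1), of z] c(2) by simp
  moreover have "(vzero R, \<zero>) \<in> span_seq R m z \<times> F"
    using S unfolding is_subspace_def by simp
  ultimately have "lin_comb R m c z = vzero R" "c m = \<zero>"
    using inj_onD[OF span_seq_Suc_inj[OF z new]] by auto
  then show ?case
    using Suc.IH[OF indep_seq_mono[OF Suc.prems(1)] c(1)] less_Suc_eq by auto
qed

lemma indep_seq_length_le:
  assumes "indep_seq R n m z"
  shows "m \<le> n"
proof -
  have "span_seq R m z \<subseteq> vecs R n"
    using span_seq_subspace[OF indep_seq_in_vecs[OF assms]] by (rule subspace_in_vecs)
  then have "q ^ m \<le> q ^ n"
    using card_span_seq[OF assms] card_mono[OF finite_vecs] card_vecs by metis
  then show ?thesis using card_carrier_ge_2 by (simp add: power_le_imp_le_exp)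
qed

text \<open>A maximal independent sequence in a subspace spans it.\<close>

lemma subspace_indep_basis:
  assumes X: "is_subspace R n X"
  shows "\<exists>m z. indep_seq R n m z \<and> (\<forall>j<m. z j \<in> X) \<and> span_seq R m z = X"
proof -
  define M where "M = {m. \<exists>z. indep_seq R n m z \<and> (\<forall>j<m. z j \<in> X)}"
  have "M \<subseteq> {..n}" unfolding M_def using indep_seq_length_le by auto
  then have fin: "finite M" using finite_subset by blast
  have "0 \<in> M" unfolding M_def indep_seq_def by auto
  define m where "m = Max M"
  have "m \<in> M" unfolding m_def using fin \<open>0 \<in> M\<close> by (intro Max_in) auto
  then obtain z where z: "indep_seq R n m z" "\<forall>j<m. z j \<in> X" unfolding M_def by blast
  have zv: "\<forall>j<m. z j \<in> vecs R n" using indep_seq_in_vecs[OF z(1)] .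
  have sub: "span_seq R m z \<subseteq> X" by (rule span_seq_subset[OF X z(2)])
  have "X \<subseteq> span_seq R m z"
  proof
    fix x assume x: "x \<in> X"
    show "x \<in> span_seq R m z"
    proof (rule ccontr)
      assume x_new: "x \<notin> span_seq R m z"
      have sc: "span_seq R i (z(m := x)) = span_seq R i z" if "i \<le> m" for i
        by (rule span_seq_cong[where n=n]) (use zv that in auto)
      have "indep_seq R n (Suc m) (z(m := x))"
        unfolding indep_seq_def
      proof (intro allI impI)
        fix i assume "i < Suc m"
        then consider "i < m" | "i = m" by linarith
        then show "(z(m := x)) i \<in> vecs R n \<and> (z(m := x)) i \<notin> span_seq R i (z(m := x))"
        proof cases
          case 1
          then show ?thesis using sc[of i] z(1) unfolding indep_seq_def by simp
        next
          case 2
          then show ?thesis using sc[of m] x x_new subspace_in_vecs[OF X] by auto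
        qed
      qed
      moreover have "\<forall>j<Suc m. (z(m := x)) j \<in> X" using z(2) x by (auto simp: less_Suc_eq)
      ultimately have "Suc m \<in> M" unfolding M_def by blast
      then show False using Max_ge[OF fin] m_def by fastforce
    qed
  qed
  then show ?thesis using z sub by blast
qed

lemma subspace_card_pow:
  assumes "is_subspace R n X"
  shows "\<exists>m\<le>n. card X = q ^ m"
proof -
  obtain m z where "indep_seq R n m z" "span_seq R m z = X"
    using subspace_indep_basis[OF assms] by blast
  then show ?thesis using card_span_seq indep_seq_length_le by blast
qed

lemma span_seq_eq_of_card:
  assumes X: "is_subspace R n X" and "card X = q ^ m" and z: "indep_seq R n m z"
    and "\<forall>j<m. z j \<in> X"
  shows "span_seq R m z = X"
  using card_subset_eq[OF subspace_finite[OF X] span_seq_subset[OF X]] card_span_seq[OF z] assms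
  by simp

lemma card_le_mult_card_kernel:
  assumes X: "is_subspace R n X"
    and f_add: "\<forall>x\<in>X. \<forall>y\<in>X. f (vadd R x y) = f x \<oplus> f y"
    and f_smult: "\<forall>a\<in>F. \<forall>x\<in>X. f (vsmult R a x) = a \<otimes> f x"
    and f_carrier: "\<forall>x\<in>X. f x \<in> F"
  shows "card X \<le> q * card {x\<in>X. f x = \<zero>}"
proof (cases "\<forall>x\<in>X. f x = \<zero>")
  case True
  then have "{x\<in>X. f x = \<zero>} = X" by auto
  then show ?thesis using card_carrier_ge_2 by simp
next
  case False
  then obtain x0 where x0: "x0 \<in> X" "f x0 \<noteq> \<zero>" by blast
  have "f x0 \<in> Units R" using f_carrier x0 field_Units by auto
  define x1 where "x1 = vsmult R (inv (f x0)) x0"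
  have x1: "x1 \<in> X" "f x1 = \<one>"
    using X x0 f_smult \<open>f x0 \<in> Units R\<close> unfolding x1_def is_subspace_def by auto
  define g where "g = (\<lambda>x. (f x, vadd R x (vsmult R (\<ominus> f x) x1)))"
  have "inj_on g X"
  proof (rule inj_onI)
    fix x y assume x: "x \<in> X" and y: "y \<in> X" and e: "g x = g y"
    have v: "x \<in> vecs R n" "y \<in> vecs R n" "x1 \<in> vecs R n"
      using x y x1 subspace_in_vecs[OF X] by auto
    have fxy: "f x = f y" and e2: "vadd R x (vsmult R (\<ominus> f x) x1) = vadd R y (vsmult R (\<ominus> f x) x1)"
      using e unfolding g_def by auto
    have "\<ominus> f x \<in> F" using f_carrier x by simp
    show "x = y"
    proof (rule vecs_eqI[OF v(1,2)])
      fix t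
      have "x t \<oplus> \<ominus> f x \<otimes> x1 t = y t \<oplus> \<ominus> f x \<otimes> x1 t"
        using fun_cong[OF e2, of t] unfolding vadd_def vsmult_def by simp
      then show "x t = y t"
        using add.r_cancel[of "\<ominus> f x \<otimes> x1 t" "x t" "y t"] \<open>\<ominus> f x \<in> F\<close>
          vecs_carrier[OF v(1)] vecs_carrier[OF v(2)] vecs_carrier[OF v(3)]
        by simp
    qed
  qed
  moreover have "g ` X \<subseteq> F \<times> {x\<in>X. f x = \<zero>}"
  proof
    fix u assume "u \<in> g ` X"
    then obtain x where x: "x \<in> X" and u: "u = g x" by blast
    have fx: "f x \<in> F" "\<ominus> f x \<in> F" using f_carrier x by auto
    have m1: "vsmult R (\<ominus> f x) x1 \<in> X" using X x1 fx unfolding is_subspace_def by auto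
    have "f (vadd R x (vsmult R (\<ominus> f x) x1)) = \<zero>"
      using f_add f_smult x m1 x1 fx by (simp add: r_neg)
    then show "u \<in> F \<times> {x\<in>X. f x = \<zero>}"
      using u x fx m1 X unfolding g_def is_subspace_def by auto
  qed
  moreover have "finite (F \<times> {x\<in>X. f x = \<zero>})"
    using finite_carrier subspace_finite[OF X] by simp
  ultimately have "card X \<le> card (F \<times> {x\<in>X. f x = \<zero>})"
    by (rule card_inj_on_le)
  then show ?thesis by (simp add: card_cartesian_product)
qed

section \<open>Dot products and annihilators\<close>

lemma finsum_swap:
  assumes A: "finite A" and B: "finite B" and f: "\<forall>i\<in>A. \<forall>j\<in>B. f i j \<in> F"
  shows "(\<Oplus>i\<in>A. \<Oplus>j\<in>B. f i j) = (\<Oplus>j\<in>B. \<Oplus>i\<in>A. f i j)"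
  using A f
proof (induction A rule: finite_induct)
  case empty
  then show ?case by (simp add: add.finprod_one_eqI)
next
  case (insert x A)
  have fx: "(\<lambda>j. f x j) \<in> B \<rightarrow> F" and fA: "\<And>j. j \<in> B \<Longrightarrow> (\<lambda>i. f i j) \<in> A \<rightarrow> F"
    using insert.prems by auto
  have "(\<Oplus>i\<in>insert x A. \<Oplus>j\<in>B. f i j) = (\<Oplus>j\<in>B. f x j) \<oplus> (\<Oplus>j\<in>B. \<Oplus>i\<in>A. f i j)"
    using insert by (subst finsum_insert) (auto intro!: finsum_closed)
  also have "\<dots> = (\<Oplus>j\<in>B. f x j \<oplus> (\<Oplus>i\<in>A. f i j))"
    using fx fA by (simp add: finsum_addf finsum_closed Pi_iff)
  also have "\<dots> = (\<Oplus>j\<in>B. \<Oplus>i\<in>insert x A. f i j)"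
    using insert.hyps fA fx insert.prems
    by (intro finsum_cong') (auto simp: finsum_insert intro!: finsum_closed)
  finally show ?case .
qed

lemma dot_carrier: "u \<in> vecs R n \<Longrightarrow> v \<in> vecs R n \<Longrightarrow> dot R n u v \<in> F"
  unfolding dot_def by (auto intro!: finsum_closed simp: vecs_carrier)

lemma dot_vadd_right:
  assumes u: "u \<in> vecs R n" and v: "v \<in> vecs R n" and w: "w \<in> vecs R n"
  shows "dot R n u (vadd R v w) = dot R n u v \<oplus> dot R n u w"
proof -
  have "dot R n u (vadd R v w) = (\<Oplus>t\<in>{..<n}. u t \<otimes> v t \<oplus> u t \<otimes> w t)"
    unfolding dot_def vadd_def using vecs_carrier[OF u] vecs_carrier[OF v] vecs_carrier[OF w]
    by (intro finsum_cong') (auto simp: r_distr)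
  also have "\<dots> = dot R n u v \<oplus> dot R n u w"
    unfolding dot_def using vecs_carrier[OF u] vecs_carrier[OF v] vecs_carrier[OF w]
    by (intro finsum_addf) auto
  finally show ?thesis .
qed

lemma dot_vadd_left:
  assumes u: "u \<in> vecs R n" and v: "v \<in> vecs R n" and w: "w \<in> vecs R n"
  shows "dot R n (vadd R v w) u = dot R n v u \<oplus> dot R n w u"
proof -
  have "dot R n (vadd R v w) u = (\<Oplus>t\<in>{..<n}. v t \<otimes> u t \<oplus> w t \<otimes> u t)"
    unfolding dot_def vadd_def using vecs_carrier[OF u] vecs_carrier[OF v] vecs_carrier[OF w]
    by (intro finsum_cong') (auto simp: l_distr)
  also have "\<dots> = dot R n v u \<oplus> dot R n w u"
    unfolding dot_def using vecs_carrier[OF u] vecs_carrier[OF v] vecs_carrier[OF w]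
    by (intro finsum_addf) auto
  finally show ?thesis .
qed

lemma dot_vsmult_right:
  assumes u: "u \<in> vecs R n" and v: "v \<in> vecs R n" and a: "a \<in> F"
  shows "dot R n u (vsmult R a v) = a \<otimes> dot R n u v"
proof -
  have "dot R n u (vsmult R a v) = (\<Oplus>t\<in>{..<n}. a \<otimes> (u t \<otimes> v t))"
    unfolding dot_def vsmult_def using vecs_carrier[OF u] vecs_carrier[OF v] a
    by (intro finsum_cong') (auto simp: m_lcomm)
  also have "\<dots> = a \<otimes> dot R n u v"
    unfolding dot_def using vecs_carrier[OF u] vecs_carrier[OF v] a
    by (subst finsum_rdistr) auto
  finally show ?thesis .
qed

lemma dot_vsmult_left:
  assumes u: "u \<in> vecs R n" and v: "v \<in> vecs R n" and a: "a \<in> F"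
  shows "dot R n (vsmult R a v) u = a \<otimes> dot R n v u"
proof -
  have "dot R n (vsmult R a v) u = (\<Oplus>t\<in>{..<n}. a \<otimes> (v t \<otimes> u t))"
    unfolding dot_def vsmult_def using vecs_carrier[OF u] vecs_carrier[OF v] a
    by (intro finsum_cong') (auto simp: m_assoc)
  also have "\<dots> = a \<otimes> dot R n v u"
    unfolding dot_def using vecs_carrier[OF u] vecs_carrier[OF v] a
    by (subst finsum_rdistr) auto
  finally show ?thesis .
qed

lemma dot_vzero_left: "u \<in> vecs R n \<Longrightarrow> dot R n (vzero R) u = \<zero>"
  unfolding dot_def vzero_def by (intro add.finprod_one_eqI) (simp add: vecs_carrier)

lemma dot_vzero_right: "u \<in> vecs R n \<Longrightarrow> dot R n u (vzero R) = \<zero>"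
  unfolding dot_def vzero_def by (intro add.finprod_one_eqI) (simp add: vecs_carrier)

definition unit_vec :: "nat \<Rightarrow> nat \<Rightarrow> nat" where
  "unit_vec t = (\<lambda>i. if i = t then \<one> else \<zero>)"

lemma unit_vec_in_vecs: "t < n \<Longrightarrow> unit_vec t \<in> vecs R n"
  unfolding unit_vec_def vecs_def by auto

lemma dot_unit_vec:
  assumes w: "w \<in> vecs R n" and t: "t < n"
  shows "dot R n w (unit_vec t) = w t"
proof -
  have "dot R n w (unit_vec t) = (\<Oplus>i\<in>{..<n}. if t = i then w i else \<zero>)"
    unfolding dot_def unit_vec_def using vecs_carrier[OF w] by (intro finsum_cong') auto
  also have "\<dots> = w t" using t vecs_carrier[OF w] by (intro finsum_singleton) auto
  finally show ?thesis .
qed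

definition dot_map :: "nat \<Rightarrow> nat \<Rightarrow> (nat \<Rightarrow> nat \<Rightarrow> nat) \<Rightarrow> (nat \<Rightarrow> nat) \<Rightarrow> nat \<Rightarrow> nat" where
  "dot_map n m z v = (\<lambda>j. if j < m then dot R n (z j) v else \<zero>)"

lemma dot_dot_map:
  assumes z: "\<forall>j<m. z j \<in> vecs R n" and c: "c \<in> vecs R m" and v: "v \<in> vecs R n"
  shows "dot R m c (dot_map n m z v) = dot R n (lin_comb R m c z) v"
proof -
  have zc: "\<And>j t. j < m \<Longrightarrow> z j t \<in> F" using vecs_seq_carrier[OF z] .
  note cv = vecs_carrier[OF c] vecs_carrier[OF v]
  have "dot R m c (dot_map n m z v) = (\<Oplus>j\<in>{..<m}. \<Oplus>t\<in>{..<n}. c j \<otimes> (z j t \<otimes> v t))"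
    unfolding dot_def dot_map_def using zc cv
    by (intro finsum_cong') (auto simp: finsum_rdistr intro!: finsum_closed)
  also have "\<dots> = (\<Oplus>t\<in>{..<n}. \<Oplus>j\<in>{..<m}. c j \<otimes> (z j t \<otimes> v t))"
    using zc cv by (intro finsum_swap) auto
  also have "\<dots> = (\<Oplus>t\<in>{..<n}. \<Oplus>j\<in>{..<m}. c j \<otimes> z j t \<otimes> v t)"
    using zc cv by (intro finsum_cong' refl) (auto simp: m_assoc intro!: finsum_closed)
  also have "\<dots> = dot R n (lin_comb R m c z) v"
    unfolding dot_def lin_comb_def using zc cv
    by (intro finsum_cong') (auto simp: finsum_ldistr intro!: finsum_closed)
  finally show ?thesis .
qed

lemma dot_map_in_vecs:
  assumes "\<forall>j<m. z j \<in> vecs R n" and "v \<in> vecs R n"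
  shows "dot_map n m z v \<in> vecs R m"
proof -
  have "dot R n (z j) v \<in> F" if "j < m" for j using assms that dot_carrier by blast
  then show ?thesis unfolding vecs_def dot_map_def by auto
qed

lemma dot_map_vadd:
  assumes z: "\<forall>j<m. z j \<in> vecs R n" and u: "u \<in> vecs R n" and v: "v \<in> vecs R n"
  shows "dot_map n m z (vadd R u v) = vadd R (dot_map n m z u) (dot_map n m z v)"
  unfolding dot_map_def vadd_def using dot_vadd_right[OF _ u v, unfolded vadd_def] z
  by (intro ext) simp

lemma dot_map_vsmult:
  assumes z: "\<forall>j<m. z j \<in> vecs R n" and a: "a \<in> F" and v: "v \<in> vecs R n"
  shows "dot_map n m z (vsmult R a v) = vsmult R a (dot_map n m z v)"
  unfolding dot_map_def vsmult_def using dot_vsmult_right[OF _ v a, unfolded vsmult_def] z a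
  by (intro ext) simp

lemma card_annihilator_ge:
  assumes y: "\<forall>l<k. y l \<in> vecs R m"
  shows "q ^ m \<le> q ^ k * card {c \<in> vecs R m. \<forall>l<k. dot R m c (y l) = \<zero>}"
  using y
proof (induction k)
  case 0
  then show ?case by (simp add: card_vecs)
next
  case (Suc k)
  define X where "X = {c \<in> vecs R m. \<forall>l<k. dot R m c (y l) = \<zero>}"
  have yk: "y k \<in> vecs R m" using Suc.prems by simp
  have X: "is_subspace R m X"
    using Suc.prems dot_vzero_left dot_vadd_left dot_vsmult_left
    unfolding is_subspace_def X_def by (auto simp: less_Suc_eq)
  have XV: "\<And>c. c \<in> X \<Longrightarrow> c \<in> vecs R m" using subspace_in_vecs[OF X] by blast
  have K: "{c\<in>X. dot R m c (y k) = \<zero>} = {c \<in> vecs R m. \<forall>l<Suc k. dot R m c (y l) = \<zero>}"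
    unfolding X_def by (auto simp: less_Suc_eq)
  have "q ^ m \<le> q ^ k * card X" using Suc by (simp add: X_def)
  also have "\<dots> \<le> q ^ k * (q * card {c\<in>X. dot R m c (y k) = \<zero>})"
    using XV dot_vadd_left[OF yk] dot_vsmult_left[OF yk] dot_carrier[OF _ yk]
    by (intro mult_le_mono2 card_le_mult_card_kernel[OF X]) auto
  finally show ?case by (simp add: K mult.assoc mult.left_commute)
qed

lemma proper_subspace_annihilator:
  assumes Y: "is_subspace R m Y" and proper: "Y \<noteq> vecs R m"
  shows "\<exists>c\<in>vecs R m. c \<noteq> vzero R \<and> (\<forall>y\<in>Y. dot R m c y = \<zero>)"
proof -
  obtain k y where y: "indep_seq R m k y" "\<forall>j<k. y j \<in> Y" "span_seq R k y = Y"
    using subspace_indep_basis[OF Y] by blast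
  have "card Y < card (vecs R m)"
    using subspace_in_vecs[OF Y] proper finite_vecs by (meson psubsetI psubset_card_mono)
  then have "q ^ k < q ^ m" using card_span_seq[OF y(1)] y(3) card_vecs by simp
  then have km: "k < m" using card_carrier_ge_2 by (simp add: power_less_imp_less_exp)
  define C where "C = {c \<in> vecs R m. \<forall>l<k. dot R m c (y l) = \<zero>}"
  have "q ^ k * q ^ (m - k) \<le> q ^ k * card C"
    using card_annihilator_ge[OF indep_seq_in_vecs[OF y(1)]] km
    by (simp add: C_def power_add[symmetric])
  moreover have "q \<le> q ^ (m - k)" using km card_carrier_ge_2 by (simp add: self_le_power)
  ultimately have "2 \<le> card C" using card_carrier_ge_2 by simp
  then obtain c where c: "c \<in> C" "c \<noteq> vzero R"
    by (metis card_le_Suc0_iff_eq not_less_eq_eq numeral_2_eq_2 subsetI subset_singletonD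
        card.infinite empty_iff finite.emptyI finite_insert insert_iff)
  have cv: "c \<in> vecs R m" using c unfolding C_def by simp
  have K: "is_subspace R m {w \<in> vecs R m. dot R m c w = \<zero>}"
    unfolding is_subspace_def
    using dot_vadd_right[OF cv] dot_vsmult_right[OF cv] dot_vzero_right[OF cv] by auto
  have "Y \<subseteq> {w \<in> vecs R m. dot R m c w = \<zero>}"
    using span_seq_subset[OF K] y(1,3) c(1) indep_seq_in_vecs[OF y(1)] unfolding C_def
    by blast
  then show ?thesis using cv c(2) by blast
qed

lemma dot_map_image_subspace:
  assumes zv: "\<forall>j<m. z j \<in> vecs R n"
  shows "is_subspace R m (dot_map n m z ` vecs R n)"
  unfolding is_subspace_def
proof (intro conjI ballI)
  show "dot_map n m z ` vecs R n \<subseteq> vecs R m" using dot_map_in_vecs[OF zv] by blast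
  have "dot_map n m z (vzero R) = vzero R"
    unfolding dot_map_def vzero_def using dot_vzero_right[of _ n, unfolded vzero_def] zv by auto
  then show "vzero R \<in> dot_map n m z ` vecs R n" by (metis vzero_in_vecs rev_image_eqI)
next
  fix u v assume "u \<in> dot_map n m z ` vecs R n" "v \<in> dot_map n m z ` vecs R n"
  then obtain u' v' where "u' \<in> vecs R n" "v' \<in> vecs R n" "u = dot_map n m z u'" "v = dot_map n m z v'"
    by blast
  then show "vadd R u v \<in> dot_map n m z ` vecs R n"
    using dot_map_vadd[OF zv] by (intro rev_image_eqI[of "vadd R u' v'"]) auto
next
  fix a u assume a: "a \<in> F" and "u \<in> dot_map n m z ` vecs R n"
  then obtain u' where "u' \<in> vecs R n" "u = dot_map n m z u'" by blast
  then show "vsmult R a u \<in> dot_map n m z ` vecs R n"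
    using dot_map_vsmult[OF zv a] a by (intro rev_image_eqI[of "vsmult R a u'"]) auto
qed

lemma dot_map_surj:
  assumes z: "indep_seq R n m z"
  shows "dot_map n m z ` vecs R n = vecs R m"
proof (rule ccontr)
  assume proper: "dot_map n m z ` vecs R n \<noteq> vecs R m"
  have zv: "\<forall>j<m. z j \<in> vecs R n" using indep_seq_in_vecs[OF z] .
  have "is_subspace R m (dot_map n m z ` vecs R n)" by (rule dot_map_image_subspace[OF zv])
  then obtain c where c: "c \<in> vecs R m" "c \<noteq> vzero R"
    and ann: "\<forall>y\<in>dot_map n m z ` vecs R n. dot R m c y = \<zero>"
    using proper_subspace_annihilator proper by blast
  have cPi: "c \<in> {..<m} \<rightarrow> F" using vecs_carrier[OF c(1)] by blast
  have w: "lin_comb R m c z \<in> vecs R n" by (rule lin_comb_in_vecs[OF cPi zv])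
  have "lin_comb R m c z = vzero R"
  proof (rule vecs_eqI[OF w vzero_in_vecs])
    fix t assume t: "t < n"
    have "dot R n (lin_comb R m c z) (unit_vec t) = \<zero>"
      using ann unit_vec_in_vecs[OF t] dot_dot_map[OF zv c(1) unit_vec_in_vecs[OF t]] by auto
    then show "lin_comb R m c z t = vzero R t" using dot_unit_vec[OF w t] by (simp add: vzero_def)
  qed
  then have "\<forall>j<m. c j = \<zero>" using indep_seq_lin_comb_eq_zero[OF z cPi] by simp
  then have "c = vzero R" by (intro vecs_eqI[OF c(1) vzero_in_vecs]) (simp add: vzero_def)
  then show False using c(2) by simp
qed

lemma card_image_mult_card_kernel_le:
  assumes phi_vecs: "\<forall>v\<in>vecs R n. phi v \<in> vecs R m"
    and phi_add: "\<forall>u\<in>vecs R n. \<forall>v\<in>vecs R n. phi (vadd R u v) = vadd R (phi u) (phi v)"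
  shows "card (phi ` vecs R n) * card {v \<in> vecs R n. phi v = vzero R} \<le> q ^ n"
proof -
  define S where "S = {v \<in> vecs R n. phi v = vzero R}"
  define pre where "pre = (\<lambda>y. SOME x. x \<in> vecs R n \<and> phi x = y)"
  have pre: "pre y \<in> vecs R n \<and> phi (pre y) = y" if "y \<in> phi ` vecs R n" for y
  proof -
    have "\<exists>x. x \<in> vecs R n \<and> phi x = y" using that by blast
    then show ?thesis unfolding pre_def by (rule someI_ex)
  qed
  define h where "h = (\<lambda>(y, s). vadd R (pre y) s)"
  have phi_h: "phi (h (y, s)) = y" if "y \<in> phi ` vecs R n" "s \<in> S" for y s
  proof -
    have "phi (h (y, s)) = vadd R y (vzero R)"
      using that pre[OF that(1)] phi_add unfolding h_def S_def by simp
    also have "\<dots> = y" using that(1) phi_vecs vadd_vzero_right by blast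
    finally show ?thesis .
  qed
  have "inj_on h (phi ` vecs R n \<times> S)"
  proof (rule inj_onI)
    fix p p' assume p: "p \<in> phi ` vecs R n \<times> S" and p': "p' \<in> phi ` vecs R n \<times> S"
      and e: "h p = h p'"
    obtain y s y' s' where pp: "p = (y, s)" "p' = (y', s')" by fastforce
    have y: "y \<in> phi ` vecs R n" "s \<in> S" and y': "y' \<in> phi ` vecs R n" "s' \<in> S"
      using p p' pp by auto
    have yy: "y = y'" using phi_h[OF y] phi_h[OF y'] e pp by simp
    have v: "s \<in> vecs R n" "s' \<in> vecs R n" "pre y \<in> vecs R n"
      using y y' pre unfolding S_def by auto
    have "s = s'"
    proof (rule vecs_eqI[OF v(1,2)])
      fix t
      have "pre y t \<oplus> s t = pre y t \<oplus> s' t"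
        using fun_cong[OF e, of t] yy pp unfolding h_def vadd_def by simp
      then show "s t = s' t"
        using add.l_cancel[of "pre y t" "s t" "s' t"] vecs_carrier[OF v(1)] vecs_carrier[OF v(2)]
          vecs_carrier[OF v(3)]
        by simp
    qed
    then show "p = p'" using yy pp by simp
  qed
  moreover have "h ` (phi ` vecs R n \<times> S) \<subseteq> vecs R n"
    unfolding h_def S_def using pre by auto
  ultimately have "card (phi ` vecs R n \<times> S) \<le> card (vecs R n)"
    using finite_vecs by (rule card_inj_on_le)
  then show ?thesis unfolding S_def by (simp add: card_cartesian_product card_vecs)
qed

lemma card_orthogonal_indep_seq_le:
  assumes z: "indep_seq R n m z"
  shows "card {v \<in> vecs R n. \<forall>j<m. dot R n (z j) v = \<zero>} \<le> q ^ (n - m)"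
proof -
  have zv: "\<forall>j<m. z j \<in> vecs R n" using indep_seq_in_vecs[OF z] .
  have ker: "{v \<in> vecs R n. dot_map n m z v = vzero R} = {v \<in> vecs R n. \<forall>j<m. dot R n (z j) v = \<zero>}"
    unfolding dot_map_def vzero_def by (auto simp: fun_eq_iff)
  have "q ^ m * card {v \<in> vecs R n. \<forall>j<m. dot R n (z j) v = \<zero>} \<le> q ^ (n - m) * q ^ m"
    using card_image_mult_card_kernel_le[of n "dot_map n m z" m] dot_map_in_vecs[OF zv]
      dot_map_vadd[OF zv] dot_map_surj[OF z] indep_seq_length_le[OF z]
    by (simp add: ker card_vecs power_add[symmetric])
  then show ?thesis using card_carrier_ge_2 by (simp add: mult.commute)
qed

section \<open>The matrix as a map, its kernel and its rank\<close>

lemma add_neg_one_mult_eq_zero_iff: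
  "x \<in> F \<Longrightarrow> y \<in> F \<Longrightarrow> x \<oplus> \<ominus> \<one> \<otimes> y = \<zero> \<longleftrightarrow> x = y"
  by (metis a_minus_def l_minus l_one one_closed r_right_minus_eq)

lemma alt_matrix_carrier: "alt_matrix R n A \<Longrightarrow> i < n \<Longrightarrow> j < n \<Longrightarrow> A i j \<in> F"
  unfolding alt_matrix_def by blast

lemma vec_mat_apply: "t < n \<Longrightarrow> vec_mat R n A u t = (\<Oplus>i\<in>{..<n}. u i \<otimes> A i t)"
  unfolding vec_mat_def by simp

lemma vec_mat_in_vecs:
  assumes A: "alt_matrix R n A" and u: "u \<in> vecs R n"
  shows "vec_mat R n A u \<in> vecs R n"
proof -
  have "(\<Oplus>i\<in>{..<n}. u i \<otimes> A i t) \<in> F" if "t < n" for t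
    using that vecs_carrier[OF u] alt_matrix_carrier[OF A] by (auto intro!: finsum_closed)
  then show ?thesis unfolding vecs_def vec_mat_def by auto
qed

lemma vec_mat_vadd:
  assumes A: "alt_matrix R n A" and u: "u \<in> vecs R n" and v: "v \<in> vecs R n"
  shows "vec_mat R n A (vadd R u v) = vadd R (vec_mat R n A u) (vec_mat R n A v)"
proof
  fix t
  show "vec_mat R n A (vadd R u v) t = vadd R (vec_mat R n A u) (vec_mat R n A v) t"
  proof (cases "t < n")
    case True
    have "vec_mat R n A (vadd R u v) t = (\<Oplus>i\<in>{..<n}. u i \<otimes> A i t \<oplus> v i \<otimes> A i t)"
      unfolding vec_mat_apply[OF True] vadd_def
      using True vecs_carrier[OF u] vecs_carrier[OF v] alt_matrix_carrier[OF A]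
      by (intro finsum_cong') (auto simp: l_distr)
    also have "\<dots> = vadd R (vec_mat R n A u) (vec_mat R n A v) t"
      unfolding vec_mat_apply[OF True] vadd_def
      using True vecs_carrier[OF u] vecs_carrier[OF v] alt_matrix_carrier[OF A]
      by (intro finsum_addf) auto
    finally show ?thesis .
  next
    case False
    then show ?thesis unfolding vec_mat_def vadd_def by simp
  qed
qed

lemma vec_mat_vsmult:
  assumes A: "alt_matrix R n A" and u: "u \<in> vecs R n" and a: "a \<in> F"
  shows "vec_mat R n A (vsmult R a u) = vsmult R a (vec_mat R n A u)"
proof
  fix t
  show "vec_mat R n A (vsmult R a u) t = vsmult R a (vec_mat R n A u) t"
  proof (cases "t < n")
    case True
    have "vec_mat R n A (vsmult R a u) t = (\<Oplus>i\<in>{..<n}. a \<otimes> (u i \<otimes> A i t))"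
      unfolding vec_mat_apply[OF True] vsmult_def
      using True vecs_carrier[OF u] alt_matrix_carrier[OF A] a
      by (intro finsum_cong') (auto simp: m_assoc)
    also have "\<dots> = vsmult R a (vec_mat R n A u) t"
      unfolding vec_mat_apply[OF True] vsmult_def
      using True vecs_carrier[OF u] alt_matrix_carrier[OF A] a
      by (subst finsum_rdistr) auto
    finally show ?thesis .
  next
    case False
    then show ?thesis unfolding vec_mat_def vsmult_def using a by simp
  qed
qed

lemma vec_mat_vzero:
  assumes A: "alt_matrix R n A"
  shows "vec_mat R n A (vzero R) = vzero R"
proof -
  have "vec_mat R n A (vzero R) = vsmult R \<zero> (vec_mat R n A (vzero R))"
    using vec_mat_vsmult[OF A vzero_in_vecs zero_closed] vsmult_vzero[OF zero_closed] by simp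
  also have "\<dots> = vzero R"
    using vecs_carrier[OF vec_mat_in_vecs[OF A vzero_in_vecs]]
    by (intro ext) (simp add: vsmult_def vzero_def)
  finally show ?thesis .
qed

lemma vec_mat_lin_comb:
  assumes A: "alt_matrix R n A" and z: "\<forall>j<m. z j \<in> vecs R n" and c: "c \<in> {..<m} \<rightarrow> F"
  shows "vec_mat R n A (lin_comb R m c z) = lin_comb R m c (\<lambda>j. vec_mat R n A (z j))"
  using z c
proof (induction m)
  case 0
  then show ?case using vec_mat_vzero[OF A] by (simp add: lin_comb_0)
next
  case (Suc m)
  have z': "\<forall>j<m. z j \<in> vecs R n" and c': "c \<in> {..<m} \<rightarrow> F" and cm: "c m \<in> F"
    and zm: "z m \<in> vecs R n"
    using Suc.prems by (auto simp: Pi_iff)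
  have Az: "\<forall>j<Suc m. vec_mat R n A (z j) \<in> vecs R n"
    using Suc.prems vec_mat_in_vecs[OF A] by auto
  have "vec_mat R n A (lin_comb R (Suc m) c z)
      = vadd R (vec_mat R n A (lin_comb R m c z)) (vsmult R (c m) (vec_mat R n A (z m)))"
    using lin_comb_Suc[OF Suc.prems(2,1)] vec_mat_vadd[OF A lin_comb_in_vecs[OF c' z']]
      vec_mat_vsmult[OF A zm cm] cm zm
    by simp
  also have "\<dots> = lin_comb R (Suc m) c (\<lambda>j. vec_mat R n A (z j))"
    using Suc.IH[OF z' c'] lin_comb_Suc[OF Suc.prems(2) Az] by simp
  finally show ?case .
qed

lemma bilin_eq_dot_vec_mat:
  assumes A: "alt_matrix R n A" and u: "u \<in> vecs R n" and v: "v \<in> vecs R n"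
  shows "bilin R n A u v = dot R n (vec_mat R n A u) v"
proof -
  note c = vecs_carrier[OF u] vecs_carrier[OF v] alt_matrix_carrier[OF A]
  have "bilin R n A u v = (\<Oplus>j\<in>{..<n}. \<Oplus>i\<in>{..<n}. u i \<otimes> A i j \<otimes> v j)"
    unfolding bilin_def using c by (intro finsum_swap) auto
  also have "\<dots> = dot R n (vec_mat R n A u) v"
    unfolding dot_def using c vecs_carrier[OF vec_mat_in_vecs[OF A u]]
    by (intro finsum_cong') (auto simp: vec_mat_apply finsum_ldistr)
  finally show ?thesis .
qed

definition mat_kernel :: "nat \<Rightarrow> (nat \<Rightarrow> nat \<Rightarrow> nat) \<Rightarrow> (nat \<Rightarrow> nat) set" where
  "mat_kernel n A = {x \<in> vecs R n. vec_mat R n A x = vzero R}"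

lemma mat_kernel_subspace: "alt_matrix R n A \<Longrightarrow> is_subspace R n (mat_kernel n A)"
  unfolding is_subspace_def mat_kernel_def
  using vec_mat_vadd vec_mat_vsmult vec_mat_vzero vadd_vzero_right[OF vzero_in_vecs] vsmult_vzero
  by auto

lemma mat_rank_witness: "\<exists>J. J \<subseteq> {..<n} \<and> cols_indep R n A J \<and> card J = mat_rank R n A"
proof -
  let ?S = "{card J | J. J \<subseteq> {..<n} \<and> cols_indep R n A J}"
  have "?S \<subseteq> card ` Pow {..<n}" by blast
  then have "finite ?S" by (rule finite_subset) simp
  moreover have "cols_indep R n A {}" unfolding cols_indep_def by simp
  then have "?S \<noteq> {}" by blast
  ultimately have "mat_rank R n A \<in> ?S" unfolding mat_rank_def by (rule Max_in)
  then show ?thesis by auto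
qed

lemma mat_rank_le: "mat_rank R n A \<le> n"
  using mat_rank_witness card_mono[of "{..<n}"] by (metis card_lessThan finite_lessThan)

text \<open>By skew-symmetry, a vector in the left kernel is also in the right kernel.\<close>

lemma alt_matrix_col_comb_eq_zero:
  assumes A: "alt_matrix R n A" and x: "x \<in> mat_kernel n A" and J: "J \<subseteq> {..<n}"
    and supp: "\<forall>t<n. t \<notin> J \<longrightarrow> x t = \<zero>" and i: "i < n"
  shows "(\<Oplus>j\<in>J. x j \<otimes> A i j) = \<zero>"
proof -
  have xv: "x \<in> vecs R n" using x unfolding mat_kernel_def by simp
  have fJ: "finite J" using J finite_subset by blast
  have xA: "x j \<otimes> A j i \<in> F" if "j < n" for j
    using that i vecs_carrier[OF xv] alt_matrix_carrier[OF A] by simp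
  have "(\<Oplus>j\<in>J. x j \<otimes> A j i) = (\<Oplus>j\<in>{..<n}. x j \<otimes> A j i)"
    using J supp xA vecs_carrier[OF xv] alt_matrix_carrier[OF A] i
    by (intro add.finprod_mono_neutral_cong_left) auto
  also have "\<dots> = vec_mat R n A x i" using vec_mat_apply[OF i] by simp
  also have "\<dots> = \<zero>" using x unfolding mat_kernel_def vzero_def by simp
  finally have T: "(\<Oplus>j\<in>J. x j \<otimes> A j i) = \<zero>" .
  have "x j \<otimes> A i j = \<ominus> \<one> \<otimes> (x j \<otimes> A j i)" if "j \<in> J" for j
  proof -
    have j: "j < n" using that J by auto
    then have "A i j = \<ominus> A j i" using A i unfolding alt_matrix_def by blast
    then show ?thesis
      using i j vecs_carrier[OF xv] alt_matrix_carrier[OF A] by (simp add: r_minus l_minus)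
  qed
  then have "(\<Oplus>j\<in>J. x j \<otimes> A i j) = (\<Oplus>j\<in>J. \<ominus> \<one> \<otimes> (x j \<otimes> A j i))"
    using xA J by (intro finsum_cong') auto
  also have "\<dots> = \<ominus> \<one> \<otimes> (\<Oplus>j\<in>J. x j \<otimes> A j i)"
    using xA J fJ by (intro finsum_rdistr[symmetric]) auto
  finally show ?thesis using T by simp
qed

lemma card_mat_kernel:
  assumes A: "alt_matrix R n A"
  shows "card (mat_kernel n A) \<le> q ^ (n - mat_rank R n A)"
proof -
  obtain J where J: "J \<subseteq> {..<n}" "cols_indep R n A J" "card J = mat_rank R n A"
    using mat_rank_witness by blast
  let ?D = "{..<n} - J"
  have K: "is_subspace R n (mat_kernel n A)" by (rule mat_kernel_subspace[OF A])
  have "inj_on (\<lambda>x. restrict x ?D) (mat_kernel n A)"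
  proof (rule inj_onI)
    fix x y assume x: "x \<in> mat_kernel n A" and y: "y \<in> mat_kernel n A"
      and e: "restrict x ?D = restrict y ?D"
    have v: "x \<in> vecs R n" "y \<in> vecs R n" using x y subspace_in_vecs[OF K] by auto
    define d where "d = vadd R x (vsmult R (\<ominus> \<one>) y)"
    have d: "d \<in> mat_kernel n A" "d \<in> vecs R n"
      unfolding d_def using K x y subspace_in_vecs[OF K] unfolding is_subspace_def by auto
    have d_iff: "d t = \<zero> \<longleftrightarrow> x t = y t" for t
      unfolding d_def vadd_def vsmult_def
      using add_neg_one_mult_eq_zero_iff vecs_carrier[OF v(1)] vecs_carrier[OF v(2)] by simp
    have "x t = y t" if "t < n" "t \<notin> J" for t
      using fun_cong[OF e, of t] that by simp
    then have outside: "\<forall>t<n. t \<notin> J \<longrightarrow> d t = \<zero>" using d_iff by blast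
    have "\<forall>j\<in>J. d j = \<zero>"
      using J(2) alt_matrix_col_comb_eq_zero[OF A d(1) J(1) outside] vecs_carrier[OF d(2)]
      unfolding cols_indep_def by blast
    then show "x = y" using outside d_iff J(1) by (intro vecs_eqI[OF v]) blast
  qed
  moreover have "(\<lambda>x. restrict x ?D) ` mat_kernel n A \<subseteq> ?D \<rightarrow>\<^sub>E F"
  proof
    fix u assume "u \<in> (\<lambda>x. restrict x ?D) ` mat_kernel n A"
    then obtain x where "x \<in> vecs R n" "u = restrict x ?D" using subspace_in_vecs[OF K] by blast
    then show "u \<in> ?D \<rightarrow>\<^sub>E F" by (simp add: vecs_carrier)
  qed
  moreover have "finite (?D \<rightarrow>\<^sub>E F)" using finite_carrier by (simp add: finite_PiE)
  ultimately have "card (mat_kernel n A) \<le> card (?D \<rightarrow>\<^sub>E F)" by (rule card_inj_on_le)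
  also have "\<dots> = q ^ (n - mat_rank R n A)"
    using J by (simp add: card_PiE card_Diff_subset finite_subset)
  finally show ?thesis .
qed

section \<open>Counting ordered bases\<close>

lemma indep_seq_snoc:
  assumes xs: "indep_seq R n (length xs) (\<lambda>j. xs ! j)"
    and v: "v \<in> vecs R n" "v \<notin> span_seq R (length xs) (\<lambda>j. xs ! j)"
  shows "indep_seq R n (Suc (length xs)) (\<lambda>j. (xs @ [v]) ! j)"
  unfolding indep_seq_def
proof (intro allI impI)
  fix i assume i: "i < Suc (length xs)"
  have "span_seq R i (\<lambda>j. (xs @ [v]) ! j) = span_seq R i (\<lambda>j. xs ! j)"
    using indep_seq_in_vecs[OF xs] i by (intro span_seq_cong[where n=n]) (auto simp: nth_append)
  then show "(xs @ [v]) ! i \<in> vecs R n \<and> (xs @ [v]) ! i \<notin> span_seq R i (\<lambda>j. (xs @ [v]) ! j)"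
    using xs v i unfolding indep_seq_def by (cases "i = length xs") (auto simp: nth_append)
qed

lemma card_diff_span_seq_ge:
  assumes X: "is_subspace R n X" and cX: "card X = q ^ d"
    and z: "indep_seq R n k z" "\<forall>j<k. z j \<in> X" and k: "k < d"
  shows "q ^ (d - 1) \<le> card (X - span_seq R k z)"
proof -
  have sub: "span_seq R k z \<subseteq> X" by (rule span_seq_subset[OF X z(2)])
  have "card (X - span_seq R k z) = q ^ d - q ^ k"
    using card_Diff_subset[OF finite_subset[OF sub subspace_finite[OF X]] sub] cX card_span_seq[OF z(1)]
    by simp
  moreover have "q ^ k \<le> q ^ (d - 1)" using k card_carrier_ge_2 by (intro power_increasing) auto
  moreover have "q ^ d = q * q ^ (d - 1)" using k by (cases d) auto
  moreover have "2 * q ^ (d - 1) \<le> q * q ^ (d - 1)" using card_carrier_ge_2 by simp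
  ultimately show ?thesis by linarith
qed

definition indep_ext :: "nat \<Rightarrow> (nat \<Rightarrow> nat) list \<Rightarrow> (nat \<Rightarrow> nat) set \<Rightarrow> nat \<Rightarrow> (nat \<Rightarrow> nat) list set" where
  "indep_ext n p X m =
     {ys. length ys = m \<and> set ys \<subseteq> X \<and> indep_seq R n (length p + m) (\<lambda>j. (p @ ys) ! j)}"

lemma finite_indep_ext:
  assumes "is_subspace R n X"
  shows "finite (indep_ext n p X m)"
proof (rule finite_subset)
  show "indep_ext n p X m \<subseteq> {ys. set ys \<subseteq> X \<and> length ys = m}"
    unfolding indep_ext_def by auto
  show "finite {ys. set ys \<subseteq> X \<and> length ys = m}"
    by (rule finite_lists_length_eq[OF subspace_finite[OF assms]])
qed

lemma card_indep_ext_ge: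
  assumes X: "is_subspace R n X" and cX: "card X = q ^ d"
    and p: "indep_seq R n (length p) (\<lambda>j. p ! j)" "set p \<subseteq> X" and le: "length p + m \<le> d"
  shows "q ^ ((d - 1) * m) \<le> card (indep_ext n p X m)"
  using le
proof (induction m)
  case 0
  have "indep_ext n p X 0 = {[]}" unfolding indep_ext_def using p by auto
  then show ?case by simp
next
  case (Suc m)
  let ?k = "length p + m"
  let ?avoid = "\<lambda>ys. X - span_seq R ?k (\<lambda>j. (p @ ys) ! j)"
  have avoid: "q ^ (d - 1) \<le> card (?avoid ys)" if ys: "ys \<in> indep_ext n p X m" for ys
  proof (rule card_diff_span_seq_ge[OF X cX])
    show "indep_seq R n ?k (\<lambda>j. (p @ ys) ! j)" using ys unfolding indep_ext_def by simp
    show "\<forall>j<?k. (p @ ys) ! j \<in> X"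
    proof (intro allI impI)
      fix j assume "j < ?k"
      then have "(p @ ys) ! j \<in> set (p @ ys)" using ys unfolding indep_ext_def by (intro nth_mem) simp
      then show "(p @ ys) ! j \<in> X" using ys p(2) unfolding indep_ext_def by auto
    qed
  qed (use Suc.prems in simp)
  have snoc: "(\<lambda>(ys, v). ys @ [v]) ` Sigma (indep_ext n p X m) ?avoid \<subseteq> indep_ext n p X (Suc m)"
  proof
    fix w assume "w \<in> (\<lambda>(ys, v). ys @ [v]) ` Sigma (indep_ext n p X m) ?avoid"
    then obtain ys v where ys: "ys \<in> indep_ext n p X m" and v: "v \<in> X" "v \<notin> span_seq R ?k (\<lambda>j. (p @ ys) ! j)"
      and w: "w = ys @ [v]"
      by auto
    have "indep_seq R n (Suc ?k) (\<lambda>j. ((p @ ys) @ [v]) ! j)"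
      using indep_seq_snoc[where xs = "p @ ys" and v = v] ys v subspace_in_vecs[OF X] unfolding indep_ext_def by auto
    then show "w \<in> indep_ext n p X (Suc m)" using ys v w unfolding indep_ext_def by auto
  qed
  have fin: "finite (Sigma (indep_ext n p X m) ?avoid)"
    using finite_indep_ext[OF X] subspace_finite[OF X] by auto
  have "card (indep_ext n p X m) * q ^ (d - 1) \<le> (\<Sum>ys\<in>indep_ext n p X m. card (?avoid ys))"
    using avoid sum_mono[of "indep_ext n p X m" "\<lambda>_. q ^ (d - 1)"] by simp
  also have "\<dots> = card (Sigma (indep_ext n p X m) ?avoid)"
    using finite_indep_ext[OF X] subspace_finite[OF X] by (simp add: card_SigmaI)
  also have "\<dots> = card ((\<lambda>(ys, v). ys @ [v]) ` Sigma (indep_ext n p X m) ?avoid)"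
    by (rule card_image[symmetric]) (intro inj_onI, auto)
  also have "\<dots> \<le> card (indep_ext n p X (Suc m))"
    by (rule card_mono[OF finite_indep_ext[OF X] snoc])
  finally have "card (indep_ext n p X m) * q ^ (d - 1) \<le> card (indep_ext n p X (Suc m))" .
  moreover have "q ^ ((d - 1) * m) \<le> card (indep_ext n p X m)" using Suc by simp
  then have "q ^ ((d - 1) * m) * q ^ (d - 1) \<le> card (indep_ext n p X m) * q ^ (d - 1)"
    by (rule mult_right_mono) simp
  moreover have "q ^ ((d - 1) * Suc m) = q ^ ((d - 1) * m) * q ^ (d - 1)"
    by (simp add: power_add[symmetric] add.commute)
  ultimately show ?case by linarith
qed

definition isotropic_frames :: "nat \<Rightarrow> (nat \<Rightarrow> nat \<Rightarrow> nat) \<Rightarrow> nat \<Rightarrow> (nat \<Rightarrow> nat) list set" where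
  "isotropic_frames n A b =
     {ys. length ys = b \<and> set ys \<subseteq> vecs R n \<and> indep_seq R n b (\<lambda>j. vec_mat R n A (ys ! j)) \<and>
          (\<forall>i<b. \<forall>j<i. dot R n (vec_mat R n A (ys ! j)) (ys ! i) = \<zero>)}"

lemma finite_isotropic_frames: "finite (isotropic_frames n A b)"
proof (rule finite_subset)
  show "isotropic_frames n A b \<subseteq> {ys. set ys \<subseteq> vecs R n \<and> length ys = b}"
    unfolding isotropic_frames_def by auto
  show "finite {ys. set ys \<subseteq> vecs R n \<and> length ys = b}"
    by (rule finite_lists_length_eq[OF finite_vecs])
qed

lemma isotropic_frames_Suc_subset:
  "isotropic_frames n A (Suc b) \<subseteq> (\<lambda>(ys, v). ys @ [v]) ` Sigma (isotropic_frames n A b)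
     (\<lambda>ys. {v \<in> vecs R n. \<forall>j<b. dot R n (vec_mat R n A (ys ! j)) v = \<zero>})"
proof
  fix zs assume zs: "zs \<in> isotropic_frames n A (Suc b)"
  then have "length zs = Suc b" unfolding isotropic_frames_def by simp
  then obtain ys v where zs_eq: "zs = ys @ [v]" and ly: "length ys = b"
    by (auto simp: length_Suc_conv_rev)
  have nth_ys: "zs ! j = ys ! j" if "j < b" for j using that ly zs_eq by (simp add: nth_append)
  have nth_v: "zs ! b = v" using ly zs_eq by (simp add: nth_append)
  have indep: "indep_seq R n (Suc b) (\<lambda>j. vec_mat R n A (zs ! j))"
    and orth: "\<forall>i<Suc b. \<forall>j<i. dot R n (vec_mat R n A (zs ! j)) (zs ! i) = \<zero>"
    and vs: "set zs \<subseteq> vecs R n"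
    using zs unfolding isotropic_frames_def by auto
  have "ys \<in> isotropic_frames n A b"
    unfolding isotropic_frames_def
  proof (intro CollectI conjI)
    show "length ys = b" by (rule ly)
    show "set ys \<subseteq> vecs R n" using vs zs_eq by simp
    show "indep_seq R n b (\<lambda>j. vec_mat R n A (ys ! j))"
      using indep_seq_cong[OF indep_seq_mono[OF indep], of b] nth_ys by simp
    show "\<forall>i<b. \<forall>j<i. dot R n (vec_mat R n A (ys ! j)) (ys ! i) = \<zero>"
    proof (intro allI impI)
      fix i j assume "i < b" "j < i"
      then show "dot R n (vec_mat R n A (ys ! j)) (ys ! i) = \<zero>"
        using orth[rule_format, of i j] nth_ys[of i] nth_ys[of j] by simp
    qed
  qed
  moreover have "v \<in> {v \<in> vecs R n. \<forall>j<b. dot R n (vec_mat R n A (ys ! j)) v = \<zero>}"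
    using vs zs_eq orth[rule_format, of b] nth_ys nth_v by simp
  ultimately show "zs \<in> (\<lambda>(ys, v). ys @ [v]) ` Sigma (isotropic_frames n A b)
     (\<lambda>ys. {v \<in> vecs R n. \<forall>j<b. dot R n (vec_mat R n A (ys ! j)) v = \<zero>})"
    using zs_eq by (intro rev_image_eqI[of "(ys, v)"]) auto
qed

lemma card_isotropic_frames:
  "card (isotropic_frames n A b) \<le> q ^ (\<Sum>i<b. n - i)"
proof (induction b)
  case 0
  have "isotropic_frames n A 0 \<subseteq> {[]}" unfolding isotropic_frames_def by auto
  then show ?case using card_mono[OF finite.insertI[OF finite.emptyI]] by fastforce
next
  case (Suc b)
  define S where "S = (\<lambda>ys. {v \<in> vecs R n. \<forall>j<b. dot R n (vec_mat R n A (ys ! j)) v = \<zero>})"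
  have fin: "finite (Sigma (isotropic_frames n A b) S)"
    unfolding S_def using finite_isotropic_frames finite_vecs by auto
  have "card (isotropic_frames n A (Suc b)) \<le> card ((\<lambda>(ys, v). ys @ [v]) ` Sigma (isotropic_frames n A b) S)"
    using isotropic_frames_Suc_subset fin unfolding S_def by (intro card_mono) auto
  also have "\<dots> \<le> card (Sigma (isotropic_frames n A b) S)" by (rule card_image_le[OF fin])
  also have "\<dots> = (\<Sum>ys\<in>isotropic_frames n A b. card (S ys))"
    unfolding S_def using finite_isotropic_frames finite_vecs by simp
  also have "\<dots> \<le> (\<Sum>ys\<in>isotropic_frames n A b. q ^ (n - b))"
  proof (rule sum_mono)
    fix ys assume "ys \<in> isotropic_frames n A b"
    then show "card (S ys) \<le> q ^ (n - b)"
      unfolding S_def isotropic_frames_def by (intro card_orthogonal_indep_seq_le) simp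
  qed
  also have "\<dots> \<le> q ^ (\<Sum>i<b. n - i) * q ^ (n - b)" using Suc.IH by simp
  also have "\<dots> = q ^ (\<Sum>i<Suc b. n - i)" by (simp add: power_add)
  finally show ?case .
qed

lemma vadd_neg_cancel:
  assumes "w \<in> vecs R n" "l \<in> vecs R n"
  shows "vadd R (vadd R w (vsmult R (\<ominus> \<one>) l)) l = w"
proof
  fix t
  show "vadd R (vadd R w (vsmult R (\<ominus> \<one>) l)) l t = w t"
    unfolding vadd_def vsmult_def
    using vecs_carrier[OF assms(1)] vecs_carrier[OF assms(2)] by (simp add: a_assoc l_minus l_neg)
qed

lemma vec_mat_in_span_seq_imp:
  assumes A: "alt_matrix R n A" and z: "\<forall>j<i. z j \<in> vecs R n" and w: "w \<in> vecs R n"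
    and Aw: "vec_mat R n A w \<in> span_seq R i (\<lambda>j. vec_mat R n A (z j))"
  shows "\<exists>l\<in>span_seq R i z. vadd R w (vsmult R (\<ominus> \<one>) l) \<in> mat_kernel n A"
proof -
  obtain c where c: "c \<in> {..<i} \<rightarrow> F"
    and Awc: "vec_mat R n A w = lin_comb R i c (\<lambda>j. vec_mat R n A (z j))"
    using Aw unfolding span_seq_def by blast
  define l where "l = lin_comb R i c z"
  have lv: "l \<in> vecs R n" unfolding l_def by (rule lin_comb_in_vecs[OF c z])
  have "vec_mat R n A (vadd R w (vsmult R (\<ominus> \<one>) l)) = vzero R"
  proof
    fix t
    have "vec_mat R n A (vadd R w (vsmult R (\<ominus> \<one>) l)) t
        = vec_mat R n A w t \<oplus> \<ominus> \<one> \<otimes> vec_mat R n A l t"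
      using vec_mat_vadd[OF A w vsmult_in_vecs[OF _ lv]] vec_mat_vsmult[OF A lv]
      by (simp add: vadd_def vsmult_def)
    also have "\<dots> = \<zero>"
      using vec_mat_lin_comb[OF A z c] Awc add_neg_one_mult_eq_zero_iff
        vecs_carrier[OF vec_mat_in_vecs[OF A w]]
      unfolding l_def by simp
    finally show "vec_mat R n A (vadd R w (vsmult R (\<ominus> \<one>) l)) t = vzero R t"
      by (simp add: vzero_def)
  qed
  moreover have "vadd R w (vsmult R (\<ominus> \<one>) l) \<in> vecs R n" using w lv by simp
  ultimately show ?thesis
    using lin_comb_in_span_seq[OF c, of z] unfolding mat_kernel_def l_def by blast
qed

text \<open>A dependency among the A y_j yields a combination of the y_j that differs from some y_i by a
  vector of the radical U \<inter> ker A, i.e. by a combination of the x_j.\<close>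

lemma vec_mat_indep_mod_radical:
  assumes A: "alt_matrix R n A" and U: "is_subspace R n U"
    and xy: "indep_seq R n (length xs + length ys) (\<lambda>j. (xs @ ys) ! j)" and ys: "set ys \<subseteq> U"
    and xs: "span_seq R (length xs) (\<lambda>j. xs ! j) = U \<inter> mat_kernel n A"
  shows "indep_seq R n (length ys) (\<lambda>j. vec_mat R n A (ys ! j))"
  unfolding indep_seq_def
proof (intro allI impI conjI notI)
  let ?a = "length xs"
  fix i assume i: "i < length ys"
  have yU: "\<forall>j<i. ys ! j \<in> U" "ys ! i \<in> U" using ys i by auto
  have yv: "\<forall>j<i. ys ! j \<in> vecs R n" "ys ! i \<in> vecs R n"
    using yU subspace_in_vecs[OF U] by auto
  show "vec_mat R n A (ys ! i) \<in> vecs R n" by (rule vec_mat_in_vecs[OF A yv(2)])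
  assume "vec_mat R n A (ys ! i) \<in> span_seq R i (\<lambda>j. vec_mat R n A (ys ! j))"
  then obtain l where l_span: "l \<in> span_seq R i (\<lambda>j. ys ! j)"
    and ker: "vadd R (ys ! i) (vsmult R (\<ominus> \<one>) l) \<in> mat_kernel n A"
    using vec_mat_in_span_seq_imp[OF A yv] by blast
  define y where "y = vadd R (ys ! i) (vsmult R (\<ominus> \<one>) l)"
  have "l \<in> U" using span_seq_subset[OF U yU(1)] l_span by blast
  then have "y \<in> U" unfolding y_def using U yU(2) unfolding is_subspace_def by simp
  then have y_span: "y \<in> span_seq R ?a (\<lambda>j. xs ! j)" using xs ker unfolding y_def by simp
  define Z where "Z = span_seq R (?a + i) (\<lambda>j. (xs @ ys) ! j)"
  have xyv: "\<forall>j<?a + i. (xs @ ys) ! j \<in> vecs R n"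
    using indep_seq_in_vecs[OF xy] i by auto
  have Z: "is_subspace R n Z" unfolding Z_def by (rule span_seq_subspace[OF xyv])
  have "xs ! j \<in> Z" if "j < ?a" for j
  proof -
    have "(xs @ ys) ! j \<in> Z" using in_span_seq[OF _ xyv, of j] that unfolding Z_def by simp
    then show ?thesis using that by (simp add: nth_append)
  qed
  then have "y \<in> Z" using span_seq_subset[OF Z] y_span by blast
  moreover have "ys ! j \<in> Z" if "j < i" for j
  proof -
    have "(xs @ ys) ! (?a + j) \<in> Z" using in_span_seq[OF _ xyv, of "?a + j"] that unfolding Z_def by simp
    then show ?thesis by simp
  qed
  then have "l \<in> Z" using span_seq_subset[OF Z] l_span by blast
  ultimately have "vadd R y l \<in> Z" using Z unfolding is_subspace_def by blast
  moreover have "vadd R y l = ys ! i"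
    unfolding y_def using vadd_neg_cancel yv(2) span_seq_subspace[OF yv(1)] l_span subspace_in_vecs
    by blast
  moreover have "?a + i < length xs + length ys" using i by simp
  then have "(xs @ ys) ! (?a + i) \<notin> Z" using xy unfolding indep_seq_def Z_def by blast
  ultimately show False by simp
qed

definition isotropic_of_type :: "nat \<Rightarrow> (nat \<Rightarrow> nat \<Rightarrow> nat) \<Rightarrow> nat \<Rightarrow> nat \<Rightarrow> (nat \<Rightarrow> nat) set set" where
  "isotropic_of_type n A a b =
     {U. isotropic R n A U \<and> card (U \<inter> mat_kernel n A) = q ^ a \<and> card U = q ^ (a + b)}"

text \<open>Ordered bases of U whose first a vectors form a basis of the radical U \<inter> ker A.\<close>

definition adapted_bases ::
    "nat \<Rightarrow> (nat \<Rightarrow> nat \<Rightarrow> nat) \<Rightarrow> nat \<Rightarrow> nat \<Rightarrow> (nat \<Rightarrow> nat) set \<Rightarrow> ((nat \<Rightarrow> nat) list \<times> (nat \<Rightarrow> nat) list) set" where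
  "adapted_bases n A a b U = Sigma (indep_ext n [] (U \<inter> mat_kernel n A) a) (\<lambda>xs. indep_ext n xs U b)"

lemma adapted_bases_span:
  assumes U: "U \<in> isotropic_of_type n A a b" and xy: "(xs, ys) \<in> adapted_bases n A a b U"
  shows "span_seq R (a + b) (\<lambda>j. (xs @ ys) ! j) = U"
proof (rule span_seq_eq_of_card)
  show "is_subspace R n U" "card U = q ^ (a + b)"
    using U unfolding isotropic_of_type_def isotropic_def by auto
  have xy': "length xs = a" "length ys = b" "set (xs @ ys) \<subseteq> U"
    and "indep_seq R n (length xs + b) (\<lambda>j. (xs @ ys) ! j)"
    using xy unfolding adapted_bases_def indep_ext_def by auto
  then show "indep_seq R n (a + b) (\<lambda>j. (xs @ ys) ! j)" by simp
  show "\<forall>j<a + b. (xs @ ys) ! j \<in> U"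
    using xy' nth_mem[of _ "xs @ ys"] by auto
qed

lemma adapted_bases_in_isotropic_frames:
  assumes A: "alt_matrix R n A" and U: "U \<in> isotropic_of_type n A a b"
    and xy: "(xs, ys) \<in> adapted_bases n A a b U"
  shows "ys \<in> isotropic_frames n A b"
proof -
  have iso: "isotropic R n A U" using U unfolding isotropic_of_type_def by simp
  then have US: "is_subspace R n U" unfolding isotropic_def by simp
  have W: "is_subspace R n (U \<inter> mat_kernel n A)"
    using subspace_Int[OF US mat_kernel_subspace[OF A]] .
  have lx: "length xs = a" and xs_W: "set xs \<subseteq> U \<inter> mat_kernel n A"
    and gx: "indep_seq R n a (\<lambda>j. xs ! j)"
    and ly: "length ys = b" and ys_U: "set ys \<subseteq> U"
    and gxy: "indep_seq R n (a + b) (\<lambda>j. (xs @ ys) ! j)"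
    using xy unfolding adapted_bases_def indep_ext_def by auto
  have "card (U \<inter> mat_kernel n A) = q ^ a" using U unfolding isotropic_of_type_def by simp
  moreover have "\<forall>j<a. xs ! j \<in> U \<inter> mat_kernel n A" using xs_W lx nth_mem[of _ xs] by auto
  ultimately have "span_seq R a (\<lambda>j. xs ! j) = U \<inter> mat_kernel n A"
    by (rule span_seq_eq_of_card[OF W _ gx])
  then have "span_seq R (length xs) (\<lambda>j. xs ! j) = U \<inter> mat_kernel n A" using lx by simp
  moreover have "indep_seq R n (length xs + length ys) (\<lambda>j. (xs @ ys) ! j)"
    using gxy lx ly by simp
  ultimately have "indep_seq R n (length ys) (\<lambda>j. vec_mat R n A (ys ! j))"
    using vec_mat_indep_mod_radical[OF A US _ ys_U] by blast
  then have "indep_seq R n b (\<lambda>j. vec_mat R n A (ys ! j))" using ly by simp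
  moreover have "dot R n (vec_mat R n A (ys ! j)) (ys ! i) = \<zero>" if "i < b" "j < i" for i j
  proof -
    have "ys ! i \<in> U" "ys ! j \<in> U" using ys_U that ly by auto
    then show ?thesis
      using iso bilin_eq_dot_vec_mat[OF A] subspace_in_vecs[OF US]
      unfolding isotropic_def by (metis subsetD)
  qed
  ultimately show ?thesis
    using ly ys_U subspace_in_vecs[OF US] unfolding isotropic_frames_def by auto
qed

lemma card_adapted_bases_ge:
  assumes A: "alt_matrix R n A" and U: "U \<in> isotropic_of_type n A a b"
  shows "q ^ ((a - 1) * a) * q ^ ((a + b - 1) * b) \<le> card (adapted_bases n A a b U)"
proof -
  have US: "is_subspace R n U" using U unfolding isotropic_of_type_def isotropic_def by simp
  have W: "is_subspace R n (U \<inter> mat_kernel n A)"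
    using subspace_Int[OF US mat_kernel_subspace[OF A]] .
  have cW: "card (U \<inter> mat_kernel n A) = q ^ a" and cU: "card U = q ^ (a + b)"
    using U unfolding isotropic_of_type_def by auto
  let ?X = "indep_ext n [] (U \<inter> mat_kernel n A) a"
  have "q ^ ((a - 1) * a) \<le> card ?X"
    using card_indep_ext_ge[OF W cW, of "[]" a] by (simp add: indep_seq_def)
  moreover have "q ^ ((a + b - 1) * b) \<le> card (indep_ext n xs U b)" if "xs \<in> ?X" for xs
    using that card_indep_ext_ge[OF US cU, of xs b] unfolding indep_ext_def by auto
  then have "card ?X * q ^ ((a + b - 1) * b) \<le> (\<Sum>xs\<in>?X. card (indep_ext n xs U b))"
    using sum_mono[of ?X "\<lambda>_. q ^ ((a + b - 1) * b)"] by simp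
  ultimately have "q ^ ((a - 1) * a) * q ^ ((a + b - 1) * b) \<le> (\<Sum>xs\<in>?X. card (indep_ext n xs U b))"
    by (meson le_trans mult_le_mono1)
  also have "\<dots> = card (adapted_bases n A a b U)"
    unfolding adapted_bases_def using finite_indep_ext[OF W] finite_indep_ext[OF US] by simp
  finally show ?thesis .
qed

lemma finite_isotropic_of_type: "finite (isotropic_of_type n A a b)"
proof (rule finite_subset)
  show "isotropic_of_type n A a b \<subseteq> Pow (vecs R n)"
    unfolding isotropic_of_type_def isotropic_def is_subspace_def by auto
qed (simp add: finite_vecs)

text \<open>Double counting: the sets of adapted bases of distinct U are disjoint, and each adapted
  basis is a list of a kernel vectors followed by an isotropic frame.\<close>

lemma card_isotropic_of_type_mult_le:
  assumes A: "alt_matrix R n A"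
  shows "card (isotropic_of_type n A a b) * (q ^ ((a - 1) * a) * q ^ ((a + b - 1) * b))
         \<le> card (mat_kernel n A) ^ a * q ^ (\<Sum>i<b. n - i)"
proof -
  let ?I = "isotropic_of_type n A a b"
  let ?K = "{xs. set xs \<subseteq> mat_kernel n A \<and> length xs = a}"
  have finK: "finite (mat_kernel n A)" by (rule subspace_finite[OF mat_kernel_subspace[OF A]])
  have finT: "finite (adapted_bases n A a b U)" if "U \<in> ?I" for U
  proof -
    have US: "is_subspace R n U" using that unfolding isotropic_of_type_def isotropic_def by simp
    show ?thesis unfolding adapted_bases_def
      by (intro finite_SigmaI finite_indep_ext[OF US]
          finite_indep_ext[OF subspace_Int[OF US mat_kernel_subspace[OF A]]])
  qed
  have disj: "adapted_bases n A a b U \<inter> adapted_bases n A a b U' = {}"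
    if "U \<in> ?I" "U' \<in> ?I" "U \<noteq> U'" for U U'
  proof (rule ccontr)
    assume "adapted_bases n A a b U \<inter> adapted_bases n A a b U' \<noteq> {}"
    then obtain xs ys where "(xs, ys) \<in> adapted_bases n A a b U" "(xs, ys) \<in> adapted_bases n A a b U'"
      by auto
    then show False using adapted_bases_span that by metis
  qed
  have "card ?I * (q ^ ((a - 1) * a) * q ^ ((a + b - 1) * b)) \<le> (\<Sum>U\<in>?I. card (adapted_bases n A a b U))"
    using card_adapted_bases_ge[OF A] sum_mono[of ?I "\<lambda>_. q ^ ((a - 1) * a) * q ^ ((a + b - 1) * b)"]
    by simp
  also have "\<dots> = card (\<Union>U\<in>?I. adapted_bases n A a b U)"
    using finite_isotropic_of_type finT disj by (intro card_UN_disjoint[symmetric]) auto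
  also have "\<dots> \<le> card (?K \<times> isotropic_frames n A b)"
  proof (rule card_mono)
    show "finite (?K \<times> isotropic_frames n A b)"
      using finite_lists_length_eq[OF finK] finite_isotropic_frames by simp
    show "(\<Union>U\<in>?I. adapted_bases n A a b U) \<subseteq> ?K \<times> isotropic_frames n A b"
      using adapted_bases_in_isotropic_frames[OF A]
      unfolding adapted_bases_def indep_ext_def by fastforce
  qed
  also have "\<dots> = card (mat_kernel n A) ^ a * card (isotropic_frames n A b)"
    using card_lists_length_eq[OF finK] by (simp add: card_cartesian_product)
  also have "\<dots> \<le> card (mat_kernel n A) ^ a * q ^ (\<Sum>i<b. n - i)"
    using card_isotropic_frames by simp
  finally show ?thesis .
qed

lemma card_isotropic_of_type_le:
  assumes A: "alt_matrix R n A"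
  shows "card (isotropic_of_type n A a b) * q ^ ((a - 1) * a + (a + b - 1) * b)
         \<le> q ^ ((n - mat_rank R n A) * a + (\<Sum>i<b. n - i))"
proof -
  have "card (isotropic_of_type n A a b) * q ^ ((a - 1) * a + (a + b - 1) * b)
        \<le> card (mat_kernel n A) ^ a * q ^ (\<Sum>i<b. n - i)"
    using card_isotropic_of_type_mult_le[OF A, of a b] by (simp add: power_add)
  also have "\<dots> \<le> (q ^ (n - mat_rank R n A)) ^ a * q ^ (\<Sum>i<b. n - i)"
    using card_mat_kernel[OF A] by (simp add: power_mono)
  finally show ?thesis by (simp add: power_mult[symmetric] power_add)
qed

lemma isotropic_of_type_cover:
  assumes A: "alt_matrix R n A" and U: "isotropic R n A U"
  shows "\<exists>a\<le>n. \<exists>b\<le>n. U \<in> isotropic_of_type n A a b"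
proof -
  have US: "is_subspace R n U" using U unfolding isotropic_def by simp
  have W: "is_subspace R n (U \<inter> mat_kernel n A)"
    using subspace_Int[OF US mat_kernel_subspace[OF A]] .
  obtain k where k: "k \<le> n" "card U = q ^ k" using subspace_card_pow[OF US] by blast
  obtain a where a: "a \<le> n" "card (U \<inter> mat_kernel n A) = q ^ a" using subspace_card_pow[OF W] by blast
  have "q ^ a \<le> q ^ k" using a k card_mono[OF subspace_finite[OF US]] by (metis Int_lower1)
  then have "a \<le> k" using card_carrier_ge_2 by (simp add: power_le_imp_le_exp)
  then have "U \<in> isotropic_of_type n A a (k - a)" unfolding isotropic_of_type_def using U a k by simp
  then show ?thesis using a k by (meson diff_le_self le_trans)
qed

end

text \<open>The leading part of the exponent for type (a, b), with s = n - rank A; its maximum n^2/6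
  is attained at a = 0, b = n/3.\<close>

lemma type_exponent_le:
  fixes a b s n :: real
  assumes a: "0 \<le> a" and b: "0 \<le> b" and s: "0 \<le> s" and sn: "3 * s \<le> n"
  shows "a * (s - a - b) + b * n - 3 * b^2 / 2 \<le> n^2 / 6"
proof (cases "s \<le> b")
  case True
  have "a * (s - a - b) \<le> 0" using a True by (intro mult_nonneg_nonpos) auto
  moreover have "(n - 3 * b)^2 / 6 = n^2 / 6 - b * n + 3 * b^2 / 2"
    by (simp add: power2_eq_square field_simps)
  moreover have "0 \<le> (n - 3 * b)^2 / 6" by simp
  ultimately show ?thesis by linarith
next
  case False
  have "(s - b - 2 * a)^2 = (s - b)^2 - 4 * (a * (s - a - b))"
    by (simp add: power2_eq_square field_simps)
  then have h1: "a * (s - a - b) \<le> (s - b)^2 / 4"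
    using zero_le_power2[of "s - b - 2 * a"] by linarith
  have "0 \<le> (s - b) * (n - 7 * s / 4 - 5 * b / 4)" using False sn b by (intro mult_nonneg_nonneg) auto
  moreover have "(s - b) * (n - 7 * s / 4 - 5 * b / 4)
      = (s * n - 3 * s^2 / 2) - (b * n - 3 * b^2 / 2 + (s - b)^2 / 4)"
    by (simp add: power2_eq_square field_simps)
  moreover have "(n - 3 * s)^2 / 6 = n^2 / 6 - s * n + 3 * s^2 / 2"
    by (simp add: power2_eq_square field_simps)
  moreover have "0 \<le> (n - 3 * s)^2 / 6" by simp
  ultimately show ?thesis using h1 by linarith
qed

lemma double_sum_diff: "b \<le> n \<Longrightarrow> 2 * real (\<Sum>i<b. n - i) = 2 * real b * real n - real b * (real b - 1)"
proof (induction b)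
  case (Suc b)
  then have "real (\<Sum>i<Suc b. n - i) = real (\<Sum>i<b. n - i) + (real n - real b)"
    by (simp add: of_nat_diff)
  then show ?case using Suc by (simp add: algebra_simps)
qed simp

lemma type_exponent_nat_le:
  assumes sn: "3 * real s \<le> real n" and an: "a \<le> n" and bn: "b \<le> n"
  shows "real (s * a + (\<Sum>i<b. n - i)) - real ((a - 1) * a + (a + b - 1) * b)
         \<le> real n ^ 2 / 6 + 3 * real n"
proof -
  have "real ((a - 1) * a) = real a ^ 2 - real a"
    by (cases a) (simp_all add: power2_eq_square algebra_simps)
  moreover have "real ((a + b - 1) * b) = (real a + real b) * real b - real b"
    by (cases b) (simp_all add: algebra_simps)
  ultimately have "real (s * a + (\<Sum>i<b. n - i)) - real ((a - 1) * a + (a + b - 1) * b)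
      = real a * (real s - real a - real b) + real b * real n - 3 * real b ^ 2 / 2
        + real a + 3 * real b / 2"
    using double_sum_diff[OF bn] by (simp add: power2_eq_square field_simps)
  moreover have "real a * (real s - real a - real b) + real b * real n - 3 * real b ^ 2 / 2
      \<le> real n ^ 2 / 6"
    using type_exponent_le[of "real a" "real b" "real s" "real n"] sn by simp
  ultimately show ?thesis using an bn by linarith
qed

lemma square_Suc_le_four_pow: "n \<ge> 1 \<Longrightarrow> (real n + 1)^2 \<le> 4 ^ n"
proof (induction n rule: dec_induct)
  case (step k)
  have "(real (Suc k) + 1)^2 \<le> 4 * (real k + 1)^2" by (simp add: power2_eq_square field_simps)
  also have "\<dots> \<le> 4 * 4 ^ k" using step by simp
  finally show ?case by simp
qed simp

context finite_field
begin

lemma card_isotropic_of_type_le_powr: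
  assumes A: "alt_matrix R n A" and rk: "3 * real (n - mat_rank R n A) \<le> real n"
    and an: "a \<le> n" and bn: "b \<le> n"
  shows "real (card (isotropic_of_type n A a b)) \<le> real q powr (real n ^ 2 / 6 + 3 * real n)"
proof -
  define E where "E = (n - mat_rank R n A) * a + (\<Sum>i<b. n - i)"
  define Y where "Y = (a - 1) * a + (a + b - 1) * b"
  have q: "0 < real q" "1 \<le> real q" using card_carrier_ge_2 by auto
  have "real (card (isotropic_of_type n A a b)) * real q ^ Y \<le> real q ^ E"
    using card_isotropic_of_type_le[OF A, of a b] unfolding E_def Y_def
    by (metis of_nat_le_iff of_nat_mult of_nat_power)
  then have "real (card (isotropic_of_type n A a b)) \<le> real q powr (real E - real Y)"
    using q by (simp add: powr_diff powr_realpow field_simps)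
  also have "\<dots> \<le> real q powr (real n ^ 2 / 6 + 3 * real n)"
    using type_exponent_nat_le[OF rk an bn] q unfolding E_def Y_def by (intro powr_mono) auto
  finally show ?thesis .
qed

lemma card_isotropic_le:
  assumes A: "alt_matrix R n A" and n: "n > 0" and rk: "real (mat_rank R n A) > 2 / 3 * real n"
  shows "real (card {U. isotropic R n A U}) \<le> real q powr (real n ^ 2 / 6 + 5 * real n)"
proof -
  let ?P = "real q powr (real n ^ 2 / 6 + 3 * real n)"
  let ?T = "\<lambda>a b. isotropic_of_type n A a b"
  have rk3: "3 * real (n - mat_rank R n A) \<le> real n" using rk mat_rank_le by (simp add: of_nat_diff)
  have "{U. isotropic R n A U} \<subseteq> (\<Union>a\<le>n. \<Union>b\<le>n. ?T a b)"
  proof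
    fix U assume "U \<in> {U. isotropic R n A U}"
    then obtain a b where "a \<le> n" "b \<le> n" "U \<in> ?T a b" using isotropic_of_type_cover[OF A] by blast
    then show "U \<in> (\<Union>a\<le>n. \<Union>b\<le>n. ?T a b)" by blast
  qed
  then have "card {U. isotropic R n A U} \<le> card (\<Union>a\<le>n. \<Union>b\<le>n. ?T a b)"
    using finite_isotropic_of_type by (intro card_mono) auto
  also have "\<dots> \<le> (\<Sum>a\<le>n. card (\<Union>b\<le>n. ?T a b))" by (rule card_UN_le) simp
  also have "\<dots> \<le> (\<Sum>a\<le>n. \<Sum>b\<le>n. card (?T a b))" by (intro sum_mono card_UN_le) simp
  finally have "real (card {U. isotropic R n A U}) \<le> (\<Sum>a\<le>n. \<Sum>b\<le>n. real (card (?T a b)))"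
    by (metis (no_types, lifting) of_nat_le_iff of_nat_sum sum.cong)
  also have "\<dots> \<le> (\<Sum>a\<le>n. \<Sum>b\<le>n. ?P)"
    using card_isotropic_of_type_le_powr[OF A rk3] by (intro sum_mono) auto
  also have "\<dots> = (real n + 1) ^ 2 * ?P" by (simp add: power2_eq_square algebra_simps)
  also have "\<dots> \<le> real q powr (2 * real n) * ?P"
  proof (rule mult_right_mono)
    have "(real n + 1) ^ 2 \<le> 4 ^ n" using square_Suc_le_four_pow n by simp
    also have "(4::real) ^ n = 2 ^ (2 * n)" by (simp add: power_mult)
    also have "\<dots> \<le> real q ^ (2 * n)" using card_carrier_ge_2 by (intro power_mono) auto
    also have "\<dots> = real q powr (2 * real n)" using card_carrier_ge_2 by (simp add: powr_realpow[symmetric])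
    finally show "(real n + 1) ^ 2 \<le> real q powr (2 * real n)" .
  qed simp
  also have "\<dots> = real q powr (real n ^ 2 / 6 + 5 * real n)"
    by (simp add: powr_add[symmetric] algebra_simps)
  finally show ?thesis .
qed

end

theorem lemma7p6:
  shows "\<exists>D::real. D > 0 \<and>
    (\<forall>(R::nat ring) (n::nat) A.
       field R \<longrightarrow> finite (carrier R) \<longrightarrow> n > 0 \<longrightarrow> alt_matrix R n A \<longrightarrow>
       real (mat_rank R n A) > 2 / 3 * real n \<longrightarrow>
       real (card {U. isotropic R n A U})
         \<le> real (card (carrier R)) powr (real n ^ 2 / 6 + D * real n))"
proof (intro exI[of _ 5] conjI allI impI)
  fix R :: "nat ring" and n :: nat and A
  assume "field R" "finite (carrier R)" "n > 0" "alt_matrix R n A"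
    "real (mat_rank R n A) > 2 / 3 * real n"
  then interpret finite_field R by (intro finite_field.intro finite_field_axioms.intro)
  show "real (card {U. isotropic R n A U}) \<le> real (card (carrier R)) powr (real n ^ 2 / 6 + 5 * real n)"
    using card_isotropic_le \<open>n > 0\<close> \<open>alt_matrix R n A\<close> \<open>real (mat_rank R n A) > 2 / 3 * real n\<close>
    by blast
qed simp

end
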